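(* Let $\mathbf{Q}=(q_{ij})_{i,j=1}^l$ be a complex matrix with $q_{ij}q_{ji}=1$ for all $i,j$. Then the vacuum $\mathcal{A}_{\mathbf{Q}}$-module $V_{\mathbf{Q}}$ is irreducible, and every nonzero vacuum $\mathcal{A}_{\mathbf{Q}}$-module is irreducible and isomorphic to $V_{\mathbf{Q}}$.
   Context: $\mathcal{A}_{\mathbf{Q}}$ is the unital complex associative algebra with generators $X_{i,n},Y_{i,n}$ ($1\le i\le l$, $n\in\mathbb{Z}$) and relations $X_{i,m}X_{j,n}=q_{ij}X_{j,n}X_{i,m}$, $Y_{i,m}Y_{j,n}=q_{ij}Y_{j,n}Y_{i,m}$, $X_{i,m}Y_{j,n}-q_{ji}Y_{j,n}X_{i,m}=\delta_{ij}\delta_{m+n+1,0}$ for $1\le i,j\le l$, $m,n\in\mathbb{Z}$. $\mathcal{A}^+_{\mathbf{Q}}$ is the subalgebra generated by $X_{i,m},Y_{i,m}$ with $m\ge0$. A vector $w$ in an $\mathcal{A}_{\mathbf{Q}}$-module is a vacuum vector if $X_{i,m}w=Y_{i,m}w=0$ for all $i$ and all $m\ge0$; a vacuum $\mathcal{A}_{\mathbf{Q}}$-module is a module equipped with a vacuum vector that generates it. $V_{\mathbf{Q}}=\mathcal{A}_{\mathbf{Q}}/(\mathcal{A}_{\mathbf{Q}}\mathcal{A}^+_{\mathbf{Q}})$ with vacuum vector $1+\mathcal{A}_{\mathbf{Q}}\mathcal{A}^+_{\mathbf{Q}}$. *)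

theory Defs
  imports Complex_Main "HOL-Algebra.Module"
begin

definition CC :: "complex ring" where
  "CC = \<lparr>carrier = UNIV, mult = (*), one = 1, zero = 0, add = (+)\<rparr>"

definition lin_op :: "(complex, 'm) module \<Rightarrow> ('m \<Rightarrow> 'm) \<Rightarrow> bool" where
  "lin_op M f \<longleftrightarrow> (\<forall>v\<in>carrier M. f v \<in> carrier M)
     \<and> (\<forall>u\<in>carrier M. \<forall>v\<in>carrier M. f (u \<oplus>\<^bsub>M\<^esub> v) = f u \<oplus>\<^bsub>M\<^esub> f v)
     \<and> (\<forall>c. \<forall>v\<in>carrier M. f (c \<odot>\<^bsub>M\<^esub> v) = c \<odot>\<^bsub>M\<^esub> f v)"

definition AQ_module ::
  "(nat \<Rightarrow> nat \<Rightarrow> complex) \<Rightarrow> nat \<Rightarrow> (complex, 'm) module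
   \<Rightarrow> (nat \<Rightarrow> int \<Rightarrow> 'm \<Rightarrow> 'm) \<Rightarrow> (nat \<Rightarrow> int \<Rightarrow> 'm \<Rightarrow> 'm) \<Rightarrow> bool" where
  "AQ_module Q l M X Y \<longleftrightarrow> module CC M
     \<and> (\<forall>i\<in>{1..l}. \<forall>n. lin_op M (X i n) \<and> lin_op M (Y i n))
     \<and> (\<forall>i\<in>{1..l}. \<forall>j\<in>{1..l}. \<forall>m n. \<forall>v\<in>carrier M.
          X i m (X j n v) = Q i j \<odot>\<^bsub>M\<^esub> X j n (X i m v)
        \<and> Y i m (Y j n v) = Q i j \<odot>\<^bsub>M\<^esub> Y j n (Y i m v)
        \<and> X i m (Y j n v) = Q j i \<odot>\<^bsub>M\<^esub> Y j n (X i m v)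
              \<oplus>\<^bsub>M\<^esub> (if i = j \<and> m + n + 1 = 0 then v else \<zero>\<^bsub>M\<^esub>))"

definition AQ_submodule ::
  "nat \<Rightarrow> 'm set \<Rightarrow> (complex, 'm) module
   \<Rightarrow> (nat \<Rightarrow> int \<Rightarrow> 'm \<Rightarrow> 'm) \<Rightarrow> (nat \<Rightarrow> int \<Rightarrow> 'm \<Rightarrow> 'm) \<Rightarrow> bool" where
  "AQ_submodule l N M X Y \<longleftrightarrow> submodule N CC M
     \<and> (\<forall>i\<in>{1..l}. \<forall>n. \<forall>v\<in>N. X i n v \<in> N \<and> Y i n v \<in> N)"

definition AQ_irreducible ::
  "(nat \<Rightarrow> nat \<Rightarrow> complex) \<Rightarrow> nat \<Rightarrow> (complex, 'm) module
   \<Rightarrow> (nat \<Rightarrow> int \<Rightarrow> 'm \<Rightarrow> 'm) \<Rightarrow> (nat \<Rightarrow> int \<Rightarrow> 'm \<Rightarrow> 'm) \<Rightarrow> bool" where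
  "AQ_irreducible Q l M X Y \<longleftrightarrow> AQ_module Q l M X Y \<and> carrier M \<noteq> {\<zero>\<^bsub>M\<^esub>}
     \<and> (\<forall>N. AQ_submodule l N M X Y \<longrightarrow> N = {\<zero>\<^bsub>M\<^esub>} \<or> N = carrier M)"

definition is_vacuum ::
  "nat \<Rightarrow> (complex, 'm) module
   \<Rightarrow> (nat \<Rightarrow> int \<Rightarrow> 'm \<Rightarrow> 'm) \<Rightarrow> (nat \<Rightarrow> int \<Rightarrow> 'm \<Rightarrow> 'm) \<Rightarrow> 'm \<Rightarrow> bool" where
  "is_vacuum l M X Y w \<longleftrightarrow> w \<in> carrier M
     \<and> (\<forall>i\<in>{1..l}. \<forall>m\<ge>0. X i m w = \<zero>\<^bsub>M\<^esub> \<and> Y i m w = \<zero>\<^bsub>M\<^esub>)"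

definition generates ::
  "nat \<Rightarrow> (complex, 'm) module
   \<Rightarrow> (nat \<Rightarrow> int \<Rightarrow> 'm \<Rightarrow> 'm) \<Rightarrow> (nat \<Rightarrow> int \<Rightarrow> 'm \<Rightarrow> 'm) \<Rightarrow> 'm \<Rightarrow> bool" where
  "generates l M X Y w \<longleftrightarrow> (\<forall>N. AQ_submodule l N M X Y \<and> w \<in> N \<longrightarrow> carrier M \<subseteq> N)"

definition vacuum_module ::
  "(nat \<Rightarrow> nat \<Rightarrow> complex) \<Rightarrow> nat \<Rightarrow> (complex, 'm) module
   \<Rightarrow> (nat \<Rightarrow> int \<Rightarrow> 'm \<Rightarrow> 'm) \<Rightarrow> (nat \<Rightarrow> int \<Rightarrow> 'm \<Rightarrow> 'm) \<Rightarrow> 'm \<Rightarrow> bool" where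
  "vacuum_module Q l M X Y w \<longleftrightarrow> AQ_module Q l M X Y \<and> is_vacuum l M X Y w
     \<and> generates l M X Y w"

definition AQ_iso ::
  "nat \<Rightarrow> ('a \<Rightarrow> 'b)
   \<Rightarrow> (complex, 'a) module \<Rightarrow> (nat \<Rightarrow> int \<Rightarrow> 'a \<Rightarrow> 'a) \<Rightarrow> (nat \<Rightarrow> int \<Rightarrow> 'a \<Rightarrow> 'a)
   \<Rightarrow> (complex, 'b) module \<Rightarrow> (nat \<Rightarrow> int \<Rightarrow> 'b \<Rightarrow> 'b) \<Rightarrow> (nat \<Rightarrow> int \<Rightarrow> 'b \<Rightarrow> 'b) \<Rightarrow> bool" where
  "AQ_iso l \<phi> M X Y M' X' Y' \<longleftrightarrow> bij_betw \<phi> (carrier M) (carrier M')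
     \<and> (\<forall>u\<in>carrier M. \<forall>v\<in>carrier M. \<phi> (u \<oplus>\<^bsub>M\<^esub> v) = \<phi> u \<oplus>\<^bsub>M'\<^esub> \<phi> v)
     \<and> (\<forall>c. \<forall>v\<in>carrier M. \<phi> (c \<odot>\<^bsub>M\<^esub> v) = c \<odot>\<^bsub>M'\<^esub> \<phi> v)
     \<and> (\<forall>i\<in>{1..l}. \<forall>n. \<forall>v\<in>carrier M. \<phi> (X i n v) = X' i n (\<phi> v) \<and> \<phi> (Y i n v) = Y' i n (\<phi> v))"

text \<open>Generators: (i, n, True) stands for X_{i,n}, (i, n, False) for Y_{i,n}.
  The free algebra on the generators with 1 <= i <= l is represented by finitely supported
  coefficient functions on words.\<close>

type_synonym gen = "nat \<times> int \<times> bool"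
type_synonym fa = "gen list \<Rightarrow> complex"

definition gens :: "nat \<Rightarrow> gen set" where
  "gens l = {(i, n, b). 1 \<le> i \<and> i \<le> l}"

definition FA :: "nat \<Rightarrow> fa set" where
  "FA l = {f. finite {w. f w \<noteq> 0} \<and> (\<forall>w. f w \<noteq> 0 \<longrightarrow> set w \<subseteq> gens l)}"

definition fa_zero :: fa where "fa_zero = (\<lambda>w. 0)"
definition fa_add :: "fa \<Rightarrow> fa \<Rightarrow> fa" where "fa_add f g = (\<lambda>w. f w + g w)"
definition fa_smult :: "complex \<Rightarrow> fa \<Rightarrow> fa" where "fa_smult c f = (\<lambda>w. c * f w)"
definition fa_word :: "gen list \<Rightarrow> fa" where "fa_word u = (\<lambda>w. if w = u then 1 else 0)"
definition fa_mult :: "fa \<Rightarrow> fa \<Rightarrow> fa" where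
  "fa_mult f g = (\<lambda>w. \<Sum>k\<le>length w. f (take k w) * g (drop k w))"

definition rels :: "(nat \<Rightarrow> nat \<Rightarrow> complex) \<Rightarrow> nat \<Rightarrow> fa set" where
  "rels Q l =
     {fa_add (fa_word [(i, m, b), (j, n, b)]) (fa_smult (- Q i j) (fa_word [(j, n, b), (i, m, b)]))
       | i j m n b. i \<in> {1..l} \<and> j \<in> {1..l}}
   \<union> {fa_add (fa_add (fa_word [(i, m, True), (j, n, False)])
                     (fa_smult (- Q j i) (fa_word [(j, n, False), (i, m, True)])))
             (if i = j \<and> m + n + 1 = 0 then fa_smult (-1) (fa_word []) else fa_zero)
       | i j m n. i \<in> {1..l} \<and> j \<in> {1..l}}"

text \<open>The subspace of the free algebra which is the preimage of A_Q A_Q^+: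
  the two-sided ideal of relations plus the left ideal generated by X_{i,m}, Y_{i,m}, m >= 0.\<close>
inductive_set NQ :: "(nat \<Rightarrow> nat \<Rightarrow> complex) \<Rightarrow> nat \<Rightarrow> fa set" for Q l where
  zero: "fa_zero \<in> NQ Q l"
| rel: "r \<in> rels Q l \<Longrightarrow> a \<in> FA l \<Longrightarrow> b \<in> FA l \<Longrightarrow> fa_mult a (fa_mult r b) \<in> NQ Q l"
| ann: "i \<in> {1..l} \<Longrightarrow> m \<ge> 0 \<Longrightarrow> a \<in> FA l \<Longrightarrow> fa_mult a (fa_word [(i, m, b)]) \<in> NQ Q l"
| add: "f \<in> NQ Q l \<Longrightarrow> g \<in> NQ Q l \<Longrightarrow> fa_add f g \<in> NQ Q l"
| smult: "f \<in> NQ Q l \<Longrightarrow> fa_smult c f \<in> NQ Q l"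

definition vq_class :: "(nat \<Rightarrow> nat \<Rightarrow> complex) \<Rightarrow> nat \<Rightarrow> fa \<Rightarrow> fa set" where
  "vq_class Q l f = {g \<in> FA l. fa_add g (fa_smult (-1) f) \<in> NQ Q l}"

definition vq_rep :: "fa set \<Rightarrow> fa" where "vq_rep A = (SOME f. f \<in> A)"

definition VQ :: "(nat \<Rightarrow> nat \<Rightarrow> complex) \<Rightarrow> nat \<Rightarrow> (complex, fa set) module" where
  "VQ Q l = \<lparr>carrier = vq_class Q l ` FA l,
             mult = (\<lambda>A B. vq_class Q l (fa_mult (vq_rep A) (vq_rep B))),
             one = vq_class Q l (fa_word []),
             zero = vq_class Q l fa_zero,
             add = (\<lambda>A B. vq_class Q l (fa_add (vq_rep A) (vq_rep B))),
             smult = (\<lambda>c A. vq_class Q l (fa_smult c (vq_rep A)))\<rparr>"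

definition VQ_X :: "(nat \<Rightarrow> nat \<Rightarrow> complex) \<Rightarrow> nat \<Rightarrow> nat \<Rightarrow> int \<Rightarrow> fa set \<Rightarrow> fa set" where
  "VQ_X Q l i n A = vq_class Q l (fa_mult (fa_word [(i, n, True)]) (vq_rep A))"

definition VQ_Y :: "(nat \<Rightarrow> nat \<Rightarrow> complex) \<Rightarrow> nat \<Rightarrow> nat \<Rightarrow> int \<Rightarrow> fa set \<Rightarrow> fa set" where
  "VQ_Y Q l i n A = vq_class Q l (fa_mult (fa_word [(i, n, False)]) (vq_rep A))"

definition VQ_vac :: "(nat \<Rightarrow> nat \<Rightarrow> complex) \<Rightarrow> nat \<Rightarrow> fa set" where
  "VQ_vac Q l = vq_class Q l (fa_word [])"

end

theory Submission
  imports Defs "HOL-Library.Product_Lexorder"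
begin

text \<open>Every vector of a vacuum module is a combination of words in the creation operators
  (\<open>X\<^sub>i\<^sub>,\<^sub>m\<close>, \<open>Y\<^sub>i\<^sub>,\<^sub>m\<close> with \<open>m < 0\<close>) applied to the vacuum \<open>w\<close>, and each annihilation operator
  lowers the length of such words. In a nonzero submodule, a nonzero vector of minimal length is
  therefore killed by all annihilators. Pairing each creation operator \<open>c\<close> with its dual
  annihilator \<open>c\<^sup>*\<close> (the generator whose bracket with \<open>c\<close> is the scalar) gives a number
  operator \<open>\<Sum> \<epsilon>\<^sub>c c c\<^sup>*\<close> which acts on a word of length \<open>k\<close> by \<open>k\<close>; since it kills annihilated
  vectors, such a vector is a multiple of \<open>w\<close>. Hence every nonzero submodule contains \<open>w\<close>,
  so every vacuum module is irreducible.

  The quotient \<open>V\<^sub>Q\<close> is the universal vacuum module: acting by the free algebra on the vacuum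
  of any vacuum module \<open>M\<close> kills the defining ideal, so \<open>V\<^sub>Q \<rightarrow> M\<close>, \<open>[f] \<mapsto> f\<cdot>w\<close>, is a
  well-defined surjective homomorphism, injective because \<open>V\<^sub>Q\<close> is irreducible. That \<open>V\<^sub>Q \<noteq> 0\<close>
  is seen from a Fock representation on finitely supported occupation numbers, in which the
  vacuum survives; since \<open>q\<^sub>i\<^sub>i = \<plusminus>1\<close>, each mode \<open>i\<close> with \<open>q\<^sub>i\<^sub>i = -1\<close> is fermionic there.\<close>

lemma CC_simps[simp]: "carrier CC = UNIV" "mult CC = (*)" "one CC = 1" "zero CC = 0" "add CC = (+)"
  by (simp_all add: CC_def)

lemma cring_CC: "cring CC"
  apply (rule cringI)
    apply (rule abelian_groupI)
         apply (auto simp: CC_def intro: exI[of _ "- _"])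
   apply (rule comm_monoidI)
       apply (auto simp: CC_def algebra_simps)
  done

lemma CC_a_inv[simp]: "a_inv CC x = - x"
proof -
  interpret cring CC by (rule cring_CC)
  show ?thesis using minus_equality[of "- x" x] by (simp add: add.commute)
qed

lemma (in abelian_group) add_minus_eq_zero_imp_eq:
  "x \<in> carrier G \<Longrightarrow> y \<in> carrier G \<Longrightarrow> x \<oplus> \<ominus> y = \<zero> \<Longrightarrow> x = y"
  using minus_equality[of x "\<ominus> y"] minus_minus[of y] by simp

lemma submodule_zero_closed: "submodule N R M \<Longrightarrow> \<zero>\<^bsub>M\<^esub> \<in> N"
  using subgroup.one_closed[OF submodule.axioms(1)] by fastforce

section \<open>The free algebra\<close>

lemmas fa_defs = fa_add_def fa_smult_def fa_zero_def

lemma fa_mult_add_left: "fa_mult (fa_add a b) x = fa_add (fa_mult a x) (fa_mult b x)"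
  by (auto simp: fa_mult_def fa_add_def sum.distrib distrib_right)

lemma fa_mult_add_right: "fa_mult x (fa_add a b) = fa_add (fa_mult x a) (fa_mult x b)"
  by (auto simp: fa_mult_def fa_add_def sum.distrib distrib_left)

lemma fa_mult_smult_left: "fa_mult (fa_smult c a) x = fa_smult c (fa_mult a x)"
  by (auto simp: fa_mult_def fa_smult_def sum_distrib_left mult.assoc)

lemma fa_mult_smult_right: "fa_mult x (fa_smult c a) = fa_smult c (fa_mult x a)"
  by (auto simp: fa_mult_def fa_smult_def sum_distrib_left algebra_simps)

lemma fa_mult_zero_left[simp]: "fa_mult fa_zero x = fa_zero"
  by (auto simp: fa_mult_def fa_zero_def)

lemma fa_mult_zero_right[simp]: "fa_mult x fa_zero = fa_zero"
  by (auto simp: fa_mult_def fa_zero_def)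

lemma fa_smult_smult: "fa_smult a (fa_smult b x) = fa_smult (a * b) x"
  by (auto simp: fa_defs)

lemma fa_add_minus_self: "fa_add f (fa_smult (-1) f) = fa_zero"
  by (auto simp: fa_defs)

lemma fa_mult_word_word: "fa_mult (fa_word u) (fa_word v) = fa_word (u @ v)"
proof
  fix w
  have "fa_word u (take k w) * fa_word v (drop k w) = (if k = length u \<and> w = u @ v then 1 else 0)"
    if "k \<le> length w" for k
    using that by (auto simp: fa_word_def)
  then have "fa_mult (fa_word u) (fa_word v) w
      = (\<Sum>k\<le>length w. if k = length u \<and> w = u @ v then 1 else 0)"
    unfolding fa_mult_def by (intro sum.cong) auto
  also have "\<dots> = fa_word (u @ v) w"
    by (cases "w = u @ v") (auto simp: fa_word_def)
  finally show "fa_mult (fa_word u) (fa_word v) w = fa_word (u @ v) w" .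
qed

lemma fa_mult_one_left[simp]: "fa_mult (fa_word []) x = x"
proof
  fix w
  have "fa_mult (fa_word []) x w = (\<Sum>k\<le>length w. if k = 0 then x (drop k w) else 0)"
    unfolding fa_mult_def fa_word_def by (rule sum.cong) auto
  also have "\<dots> = x w" by (subst sum.delta) auto
  finally show "fa_mult (fa_word []) x w = x w" .
qed

lemma fa_word_FA: "set u \<subseteq> gens l \<Longrightarrow> fa_word u \<in> FA l"
  by (auto simp: FA_def fa_word_def)

lemma fa_word_single_FA: "i \<in> {1..l} \<Longrightarrow> fa_word [(i, m, b)] \<in> FA l"
  by (rule fa_word_FA) (simp add: gens_def)

lemma fa_zero_FA[simp]: "fa_zero \<in> FA l"
  by (auto simp: FA_def fa_zero_def)

lemma fa_add_FA: "f \<in> FA l \<Longrightarrow> g \<in> FA l \<Longrightarrow> fa_add f g \<in> FA l"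
proof -
  assume f: "f \<in> FA l" and g: "g \<in> FA l"
  have "{w. fa_add f g w \<noteq> 0} \<subseteq> {w. f w \<noteq> 0} \<union> {w. g w \<noteq> 0}" by (auto simp: fa_add_def)
  then have "finite {w. fa_add f g w \<noteq> 0}" using f g by (auto simp: FA_def intro: finite_subset)
  moreover have "fa_add f g w \<noteq> 0 \<Longrightarrow> f w \<noteq> 0 \<or> g w \<noteq> 0" for w by (auto simp: fa_add_def)
  ultimately show ?thesis using f g unfolding FA_def by blast
qed

lemma fa_smult_FA: "f \<in> FA l \<Longrightarrow> fa_smult c f \<in> FA l"
proof -
  assume f: "f \<in> FA l"
  have "{w. fa_smult c f w \<noteq> 0} \<subseteq> {w. f w \<noteq> 0}" by (auto simp: fa_smult_def)
  then show ?thesis using f by (auto simp: FA_def fa_smult_def intro: finite_subset)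
qed

lemma FA_induct[consumes 1, case_names zero step]:
  assumes f: "f \<in> FA l"
    and zero: "P fa_zero"
    and step: "\<And>c u g. set u \<subseteq> gens l \<Longrightarrow> g \<in> FA l \<Longrightarrow> P g \<Longrightarrow> P (fa_add (fa_smult c (fa_word u)) g)"
  shows "P f"
proof -
  have "f \<in> FA l \<Longrightarrow> card {w. f w \<noteq> 0} = n \<Longrightarrow> P f" for n f
  proof (induction n arbitrary: f)
    case 0
    then have "f = fa_zero" by (auto simp: FA_def fa_zero_def)
    then show "P f" using zero by simp
  next
    case (Suc n)
    then obtain u where u: "f u \<noteq> 0" by (metis (mono_tags) card.empty empty_Collect_eq nat.distinct(1))
    define g where "g = f(u := 0)"
    have "{w. g w \<noteq> 0} = {w. f w \<noteq> 0} - {u}" by (auto simp: g_def)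
    then have "card {w. g w \<noteq> 0} = n" using Suc.prems u by (simp add: FA_def)
    moreover have "g \<in> FA l" using Suc.prems by (auto simp: FA_def g_def intro: finite_subset)
    moreover have "set u \<subseteq> gens l" using Suc.prems u by (auto simp: FA_def)
    moreover have "f = fa_add (fa_smult (f u) (fa_word u)) g"
      by (auto simp: fa_defs fa_word_def g_def)
    ultimately show "P f" using step Suc.IH by metis
  qed
  then show ?thesis using f by blast
qed

lemma fa_mult_word_FA: "x \<in> FA l \<Longrightarrow> set u \<subseteq> gens l \<Longrightarrow> fa_mult (fa_word u) x \<in> FA l"
  by (induction x rule: FA_induct)
    (simp_all add: fa_mult_add_right fa_mult_smult_right fa_mult_word_word fa_add_FA fa_smult_FA fa_word_FA)

lemma fa_mult_FA: "a \<in> FA l \<Longrightarrow> x \<in> FA l \<Longrightarrow> fa_mult a x \<in> FA l"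
  by (induction a rule: FA_induct)
    (simp_all add: fa_mult_add_left fa_mult_smult_left fa_mult_word_FA fa_add_FA fa_smult_FA)

lemma fa_mult_word_append: "x \<in> FA l \<Longrightarrow> fa_mult (fa_word (u @ v)) x = fa_mult (fa_word u) (fa_mult (fa_word v) x)"
  by (induction x rule: FA_induct) (simp_all add: fa_mult_add_right fa_mult_smult_right fa_mult_word_word)

lemma fa_mult_assoc_word:
  "b \<in> FA l \<Longrightarrow> x \<in> FA l \<Longrightarrow> fa_mult (fa_mult (fa_word u) b) x = fa_mult (fa_word u) (fa_mult b x)"
  by (induction b rule: FA_induct)
    (simp_all add: fa_mult_add_right fa_mult_smult_right fa_mult_add_left fa_mult_smult_left
      fa_mult_word_word fa_mult_word_append)

lemma fa_mult_assoc: "a \<in> FA l \<Longrightarrow> b \<in> FA l \<Longrightarrow> x \<in> FA l \<Longrightarrow> fa_mult (fa_mult a b) x = fa_mult a (fa_mult b x)"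
  by (induction a rule: FA_induct) (simp_all add: fa_mult_add_left fa_mult_smult_left fa_mult_assoc_word)

lemma rels_FA: "r \<in> rels Q l \<Longrightarrow> r \<in> FA l"
  unfolding rels_def by (auto intro!: fa_add_FA fa_smult_FA fa_word_FA simp: gens_def)

lemma NQ_FA: "n \<in> NQ Q l \<Longrightarrow> n \<in> FA l"
  by (induction rule: NQ.induct) (simp_all add: fa_mult_FA rels_FA fa_word_single_FA fa_add_FA fa_smult_FA)

lemma NQ_mult_left: "n \<in> NQ Q l \<Longrightarrow> c \<in> FA l \<Longrightarrow> fa_mult c n \<in> NQ Q l"
proof (induction rule: NQ.induct)
  case (rel r a b)
  then show ?case using NQ.rel[of r Q l "fa_mult c a" b] by (simp add: fa_mult_assoc fa_mult_FA rels_FA)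
next
  case (ann i m a b)
  then show ?case using NQ.ann[of i l m "fa_mult c a"] by (simp add: fa_mult_assoc fa_word_single_FA fa_mult_FA)
qed (simp_all add: NQ.intros fa_mult_add_right fa_mult_smult_right)

section \<open>The free algebra acting on an \<open>A\<^sub>Q\<close>-module\<close>

definition gen_op :: "(nat \<Rightarrow> int \<Rightarrow> 'm \<Rightarrow> 'm) \<Rightarrow> (nat \<Rightarrow> int \<Rightarrow> 'm \<Rightarrow> 'm) \<Rightarrow> gen \<Rightarrow> 'm \<Rightarrow> 'm" where
  "gen_op X Y a = (case a of (i, m, b) \<Rightarrow> if b then X i m else Y i m)"

definition word_op :: "(nat \<Rightarrow> int \<Rightarrow> 'm \<Rightarrow> 'm) \<Rightarrow> (nat \<Rightarrow> int \<Rightarrow> 'm \<Rightarrow> 'm) \<Rightarrow> gen list \<Rightarrow> 'm \<Rightarrow> 'm" where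
  "word_op X Y u v = foldr (gen_op X Y) u v"

definition fa_act ::
  "(complex, 'm) module \<Rightarrow> (nat \<Rightarrow> int \<Rightarrow> 'm \<Rightarrow> 'm) \<Rightarrow> (nat \<Rightarrow> int \<Rightarrow> 'm \<Rightarrow> 'm) \<Rightarrow> fa \<Rightarrow> 'm \<Rightarrow> 'm" where
  "fa_act M X Y f v = finsum M (\<lambda>u. f u \<odot>\<^bsub>M\<^esub> word_op X Y u v) {u. f u \<noteq> 0}"

lemma gen_op_X[simp]: "gen_op X Y (i, m, True) = X i m"
  and gen_op_Y[simp]: "gen_op X Y (i, m, False) = Y i m"
  by (simp_all add: gen_op_def)

lemma gens_iff[simp]: "(i, m, b) \<in> gens l \<longleftrightarrow> i \<in> {1..l}"
  by (simp add: gens_def)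

lemma word_op_Nil[simp]: "word_op X Y [] v = v"
  and word_op_Cons[simp]: "word_op X Y (a # u) v = gen_op X Y a (word_op X Y u v)"
  and word_op_append: "word_op X Y (u @ x) v = word_op X Y u (word_op X Y x v)"
  by (simp_all add: word_op_def)

locale aq_rep =
  fixes Q :: "nat \<Rightarrow> nat \<Rightarrow> complex" and l :: nat and M :: "(complex, 'm) module"
    and X Y :: "nat \<Rightarrow> int \<Rightarrow> 'm \<Rightarrow> 'm"
  assumes aq: "AQ_module Q l M X Y"
begin

sublocale module CC M
  using aq by (simp add: AQ_module_def)

lemma csmult_add: "x \<in> carrier M \<Longrightarrow> (a + b) \<odot>\<^bsub>M\<^esub> x = a \<odot>\<^bsub>M\<^esub> x \<oplus>\<^bsub>M\<^esub> b \<odot>\<^bsub>M\<^esub> x"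
  using smult_l_distr[of a b x] by simp

lemma csmult_mult: "x \<in> carrier M \<Longrightarrow> (a * b) \<odot>\<^bsub>M\<^esub> x = a \<odot>\<^bsub>M\<^esub> (b \<odot>\<^bsub>M\<^esub> x)"
  using smult_assoc1[of a b x] by simp

lemma csmult_zero[simp]: "x \<in> carrier M \<Longrightarrow> 0 \<odot>\<^bsub>M\<^esub> x = \<zero>\<^bsub>M\<^esub>"
  using smult_l_null[of x] by simp

lemma csmult_one[simp]: "x \<in> carrier M \<Longrightarrow> 1 \<odot>\<^bsub>M\<^esub> x = x"
  using smult_one[of x] by simp

lemma csmult_zero_right[simp]: "c \<odot>\<^bsub>M\<^esub> \<zero>\<^bsub>M\<^esub> = \<zero>\<^bsub>M\<^esub>"
  using smult_r_null[of c] by simp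

lemma csmult_minus_one: "x \<in> carrier M \<Longrightarrow> \<ominus>\<^bsub>M\<^esub> x = (-1) \<odot>\<^bsub>M\<^esub> x"
  using smult_l_minus[of 1 x] by simp

lemma csmult_cancel: "x \<in> carrier M \<Longrightarrow> c \<odot>\<^bsub>M\<^esub> x \<oplus>\<^bsub>M\<^esub> (- c) \<odot>\<^bsub>M\<^esub> x = \<zero>\<^bsub>M\<^esub>"
  using csmult_add[of x c "- c"] by simp

lemma
  assumes "i \<in> {1..l}" "j \<in> {1..l}" "v \<in> carrier M"
  shows X_X_comm: "X i m (X j n v) = Q i j \<odot>\<^bsub>M\<^esub> X j n (X i m v)"
    and Y_Y_comm: "Y i m (Y j n v) = Q i j \<odot>\<^bsub>M\<^esub> Y j n (Y i m v)"
    and X_Y_comm: "X i m (Y j n v)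
      = Q j i \<odot>\<^bsub>M\<^esub> Y j n (X i m v) \<oplus>\<^bsub>M\<^esub> (if i = j \<and> m + n + 1 = 0 then v else \<zero>\<^bsub>M\<^esub>)"
  using aq[unfolded AQ_module_def, THEN conjunct2, THEN conjunct2, rule_format, OF assms] by blast+

lemma gen_op_lin_op: "a \<in> gens l \<Longrightarrow> lin_op M (gen_op X Y a)"
  using aq by (cases a) (auto simp: AQ_module_def gen_op_def)

lemma gen_op_closed[simp]: "a \<in> gens l \<Longrightarrow> v \<in> carrier M \<Longrightarrow> gen_op X Y a v \<in> carrier M"
  and gen_op_add: "a \<in> gens l \<Longrightarrow> u \<in> carrier M \<Longrightarrow> v \<in> carrier M \<Longrightarrow>
    gen_op X Y a (u \<oplus>\<^bsub>M\<^esub> v) = gen_op X Y a u \<oplus>\<^bsub>M\<^esub> gen_op X Y a v"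
  and gen_op_smult: "a \<in> gens l \<Longrightarrow> v \<in> carrier M \<Longrightarrow> gen_op X Y a (c \<odot>\<^bsub>M\<^esub> v) = c \<odot>\<^bsub>M\<^esub> gen_op X Y a v"
  using gen_op_lin_op by (auto simp: lin_op_def)

lemma X_closed[simp]: "i \<in> {1..l} \<Longrightarrow> v \<in> carrier M \<Longrightarrow> X i n v \<in> carrier M"
  and Y_closed[simp]: "i \<in> {1..l} \<Longrightarrow> v \<in> carrier M \<Longrightarrow> Y i n v \<in> carrier M"
  using gen_op_closed[of "(i, n, True)" v] gen_op_closed[of "(i, n, False)" v] by simp_all

lemma gen_op_zero[simp]: "a \<in> gens l \<Longrightarrow> gen_op X Y a \<zero>\<^bsub>M\<^esub> = \<zero>\<^bsub>M\<^esub>"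
  using gen_op_smult[of a "\<zero>\<^bsub>M\<^esub>" 0] by simp

lemma word_op_closed[simp]: "set u \<subseteq> gens l \<Longrightarrow> v \<in> carrier M \<Longrightarrow> word_op X Y u v \<in> carrier M"
  by (induction u) auto

lemma word_op_add: "set u \<subseteq> gens l \<Longrightarrow> x \<in> carrier M \<Longrightarrow> y \<in> carrier M \<Longrightarrow>
    word_op X Y u (x \<oplus>\<^bsub>M\<^esub> y) = word_op X Y u x \<oplus>\<^bsub>M\<^esub> word_op X Y u y"
  by (induction u) (auto simp: gen_op_add)

lemma word_op_smult: "set u \<subseteq> gens l \<Longrightarrow> x \<in> carrier M \<Longrightarrow>
    word_op X Y u (c \<odot>\<^bsub>M\<^esub> x) = c \<odot>\<^bsub>M\<^esub> word_op X Y u x"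
  by (induction u) (auto simp: gen_op_smult)

lemma word_op_zero[simp]: "set u \<subseteq> gens l \<Longrightarrow> word_op X Y u \<zero>\<^bsub>M\<^esub> = \<zero>\<^bsub>M\<^esub>"
  by (induction u) auto

lemma fa_act_closed[simp]: "f \<in> FA l \<Longrightarrow> v \<in> carrier M \<Longrightarrow> fa_act M X Y f v \<in> carrier M"
  unfolding fa_act_def by (rule M.finsum_closed) (auto simp: FA_def)

lemma fa_act_zero[simp]: "fa_act M X Y fa_zero v = \<zero>\<^bsub>M\<^esub>"
  by (simp add: fa_act_def fa_zero_def)

lemma fa_act_superset:
  assumes "f \<in> FA l" and "finite S" "{u. f u \<noteq> 0} \<subseteq> S" "S \<subseteq> {u. set u \<subseteq> gens l}"
    and "v \<in> carrier M"
  shows "fa_act M X Y f v = finsum M (\<lambda>u. f u \<odot>\<^bsub>M\<^esub> word_op X Y u v) S"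
  unfolding fa_act_def by (rule M.add.finprod_mono_neutral_cong_left) (use assms in auto)

lemma fa_act_step:
  assumes u: "set u \<subseteq> gens l" and g: "g \<in> FA l" and v: "v \<in> carrier M"
  shows "fa_act M X Y (fa_add (fa_smult c (fa_word u)) g) v = c \<odot>\<^bsub>M\<^esub> word_op X Y u v \<oplus>\<^bsub>M\<^esub> fa_act M X Y g v"
proof -
  define S where "S = insert u {x. g x \<noteq> 0}"
  let ?e = "\<lambda>x. (if x = u then c else 0) \<odot>\<^bsub>M\<^esub> word_op X Y x v"
  have S: "finite S" "S \<subseteq> {x. set x \<subseteq> gens l}" using g u by (auto simp: S_def FA_def)
  have F: "fa_add (fa_smult c (fa_word u)) g \<in> FA l" using u g by (simp add: fa_add_FA fa_smult_FA fa_word_FA)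
  have "fa_act M X Y (fa_add (fa_smult c (fa_word u)) g) v
      = finsum M (\<lambda>x. fa_add (fa_smult c (fa_word u)) g x \<odot>\<^bsub>M\<^esub> word_op X Y x v) S"
    by (rule fa_act_superset[OF F S(1) _ S(2) v]) (auto simp: S_def fa_defs fa_word_def)
  also have "\<dots> = finsum M (\<lambda>x. ?e x \<oplus>\<^bsub>M\<^esub> g x \<odot>\<^bsub>M\<^esub> word_op X Y x v) S"
    by (rule M.finsum_cong') (use S v in \<open>auto simp: fa_defs fa_word_def csmult_add\<close>)
  also have "\<dots> = finsum M ?e S \<oplus>\<^bsub>M\<^esub> finsum M (\<lambda>x. g x \<odot>\<^bsub>M\<^esub> word_op X Y x v) S"
    by (rule M.finsum_addf) (use S v in auto)
  also have "finsum M ?e S = finsum M ?e {u}"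
    by (rule M.add.finprod_mono_neutral_cong_right) (use S v in \<open>auto simp: S_def\<close>)
  also have "finsum M (\<lambda>x. g x \<odot>\<^bsub>M\<^esub> word_op X Y x v) S = fa_act M X Y g v"
    by (rule fa_act_superset[symmetric, OF g S(1) _ S(2) v]) (auto simp: S_def)
  finally show ?thesis using u v by simp
qed

lemma fa_act_add: "f \<in> FA l \<Longrightarrow> g \<in> FA l \<Longrightarrow> v \<in> carrier M \<Longrightarrow>
    fa_act M X Y (fa_add f g) v = fa_act M X Y f v \<oplus>\<^bsub>M\<^esub> fa_act M X Y g v"
proof (induction f rule: FA_induct)
  case zero
  have "fa_add fa_zero g = g" by (auto simp: fa_defs)
  then show ?case using zero by simp
next
  case (step c u h)
  have "fa_add (fa_add (fa_smult c (fa_word u)) h) g = fa_add (fa_smult c (fa_word u)) (fa_add h g)"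
    by (auto simp: fa_defs)
  then show ?case using step by (simp add: fa_act_step fa_add_FA M.a_assoc)
qed

lemma fa_act_smult: "f \<in> FA l \<Longrightarrow> v \<in> carrier M \<Longrightarrow>
    fa_act M X Y (fa_smult c f) v = c \<odot>\<^bsub>M\<^esub> fa_act M X Y f v"
proof (induction f rule: FA_induct)
  case zero
  have "fa_smult c fa_zero = fa_zero" by (auto simp: fa_defs)
  then show ?case by simp
next
  case (step d u h)
  have "fa_smult c (fa_add (fa_smult d (fa_word u)) h) = fa_add (fa_smult (c * d) (fa_word u)) (fa_smult c h)"
    by (auto simp: fa_defs algebra_simps)
  then show ?case using step by (simp add: fa_act_step fa_smult_FA smult_r_distr csmult_mult)
qed

lemma fa_act_word: "set u \<subseteq> gens l \<Longrightarrow> v \<in> carrier M \<Longrightarrow> fa_act M X Y (fa_word u) v = word_op X Y u v"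
proof -
  assume u: "set u \<subseteq> gens l" and v: "v \<in> carrier M"
  have "fa_word u = fa_add (fa_smult 1 (fa_word u)) fa_zero" by (auto simp: fa_defs)
  then show ?thesis using fa_act_step[OF u fa_zero_FA v, of 1] u v by simp
qed

lemma fa_act_at_zero[simp]: "f \<in> FA l \<Longrightarrow> fa_act M X Y f \<zero>\<^bsub>M\<^esub> = \<zero>\<^bsub>M\<^esub>"
  by (induction f rule: FA_induct) (simp_all add: fa_act_step)

lemma fa_act_mult_word: "x \<in> FA l \<Longrightarrow> set u \<subseteq> gens l \<Longrightarrow> v \<in> carrier M \<Longrightarrow>
    fa_act M X Y (fa_mult (fa_word u) x) v = word_op X Y u (fa_act M X Y x v)"
proof (induction x rule: FA_induct)
  case (step c y g)
  then show ?case
    by (simp add: fa_mult_add_right fa_mult_smult_right fa_mult_word_word fa_act_add fa_act_smult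
        fa_smult_FA fa_word_FA fa_mult_word_FA fa_act_word word_op_add word_op_smult word_op_append)
qed simp

lemma fa_act_mult: "a \<in> FA l \<Longrightarrow> x \<in> FA l \<Longrightarrow> v \<in> carrier M \<Longrightarrow>
    fa_act M X Y (fa_mult a x) v = fa_act M X Y a (fa_act M X Y x v)"
proof (induction a rule: FA_induct)
  case (step c u g)
  then show ?case
    by (simp add: fa_mult_add_left fa_mult_smult_left fa_act_add fa_act_smult fa_act_step
        fa_smult_FA fa_mult_word_FA fa_mult_FA fa_act_mult_word)
qed simp

lemma fa_act_two_words:
  assumes "a \<in> gens l" "d \<in> gens l" "y \<in> carrier M"
  shows "fa_act M X Y (fa_add (fa_word [a, d]) (fa_smult c (fa_word [d, a]))) y
    = gen_op X Y a (gen_op X Y d y) \<oplus>\<^bsub>M\<^esub> c \<odot>\<^bsub>M\<^esub> gen_op X Y d (gen_op X Y a y)"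
proof -
  have "fa_add (fa_word [a, d]) (fa_smult c (fa_word [d, a]))
      = fa_add (fa_smult 1 (fa_word [a, d])) (fa_add (fa_smult c (fa_word [d, a])) fa_zero)"
    by (auto simp: fa_defs)
  then show ?thesis using assms by (simp add: fa_act_step fa_add_FA fa_smult_FA fa_word_FA)
qed

lemma fa_act_rels:
  assumes r: "r \<in> rels Q l" and y: "y \<in> carrier M"
  shows "fa_act M X Y r y = \<zero>\<^bsub>M\<^esub>"
proof -
  from r consider (same) i j m n b where "i \<in> {1..l}" "j \<in> {1..l}"
      "r = fa_add (fa_word [(i, m, b), (j, n, b)]) (fa_smult (- Q i j) (fa_word [(j, n, b), (i, m, b)]))"
    | (mixed) i j m n where "i \<in> {1..l}" "j \<in> {1..l}"
      "r = fa_add (fa_add (fa_word [(i, m, True), (j, n, False)])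
                     (fa_smult (- Q j i) (fa_word [(j, n, False), (i, m, True)])))
             (if i = j \<and> m + n + 1 = 0 then fa_smult (-1) (fa_word []) else fa_zero)"
    unfolding rels_def by blast
  then show ?thesis
  proof cases
    case same
    have "gen_op X Y (i, m, b) (gen_op X Y (j, n, b) y) = Q i j \<odot>\<^bsub>M\<^esub> gen_op X Y (j, n, b) (gen_op X Y (i, m, b) y)"
      using X_X_comm[OF same(1,2) y] Y_Y_comm[OF same(1,2) y] by (cases b) simp_all
    then show ?thesis using same y by (simp add: fa_act_two_words csmult_cancel)
  next
    case mixed
    let ?z = "Y j n (X i m y)" and ?c = "i = j \<and> m + n + 1 = 0"
    let ?P = "fa_add (fa_word [(i, m, True), (j, n, False)]) (fa_smult (- Q j i) (fa_word [(j, n, False), (i, m, True)]))"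
    let ?E = "if ?c then fa_smult (-1) (fa_word []) else fa_zero"
    have z: "?z \<in> carrier M" using mixed y by simp
    have "fa_act M X Y ?P y = (Q j i \<odot>\<^bsub>M\<^esub> ?z \<oplus>\<^bsub>M\<^esub> (if ?c then y else \<zero>\<^bsub>M\<^esub>)) \<oplus>\<^bsub>M\<^esub> (- Q j i) \<odot>\<^bsub>M\<^esub> ?z"
      using mixed y by (simp add: fa_act_two_words X_Y_comm[OF mixed(1,2) y])
    also have "\<dots> = (if ?c then y else \<zero>\<^bsub>M\<^esub>) \<oplus>\<^bsub>M\<^esub> (Q j i \<odot>\<^bsub>M\<^esub> ?z \<oplus>\<^bsub>M\<^esub> (- Q j i) \<odot>\<^bsub>M\<^esub> ?z)"
      using z y by (simp add: M.a_ac)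
    finally have P: "fa_act M X Y ?P y = (if ?c then y else \<zero>\<^bsub>M\<^esub>)"
      using z y by (simp add: csmult_cancel)
    have E: "fa_act M X Y ?E y = (if ?c then (-1) \<odot>\<^bsub>M\<^esub> y else \<zero>\<^bsub>M\<^esub>)"
      using y by (simp add: fa_act_smult fa_act_word fa_word_FA)
    have "fa_act M X Y r y = fa_act M X Y ?P y \<oplus>\<^bsub>M\<^esub> fa_act M X Y ?E y"
      unfolding mixed(3) using mixed y by (intro fa_act_add) (auto simp: fa_add_FA fa_smult_FA fa_word_FA)
    then show ?thesis using P E y csmult_cancel[OF y, of 1] by simp
  qed
qed

lemma fa_act_NQ_vacuum:
  assumes "n \<in> NQ Q l" and w: "is_vacuum l M X Y w"
  shows "fa_act M X Y n w = \<zero>\<^bsub>M\<^esub>"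
  using assms(1)
proof (induction rule: NQ.induct)
  case (rel r a b)
  have "w \<in> carrier M" using w by (simp add: is_vacuum_def)
  then show ?case
    using rel by (simp add: fa_act_mult fa_mult_FA rels_FA fa_act_rels)
next
  case (ann i m a b)
  have "w \<in> carrier M" "gen_op X Y (i, m, b) w = \<zero>\<^bsub>M\<^esub>"
    using w ann by (auto simp: is_vacuum_def gen_op_def)
  then show ?case using ann by (simp add: fa_act_mult fa_word_single_FA fa_act_word)
next
  case (add f g)
  then show ?case using w by (simp add: fa_act_add NQ_FA is_vacuum_def)
next
  case (smult f c)
  then show ?case using w by (simp add: fa_act_smult NQ_FA is_vacuum_def)
qed simp

end

text \<open>Each generator \<open>a\<close> has a dual \<open>a\<^sup>*\<close> with \<open>a b = comm_coeff Q a b \<cdot> b a + comm_const Q a b\<close>,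
  where the constant is nonzero only for \<open>b = a\<^sup>*\<close>; \<open>number_coeff Q c\<close> normalises the product
  \<open>c c\<^sup>*\<close> so that \<open>number_coeff Q c \<cdot> c c\<^sup>*\<close> acts as a counting operator on \<open>c\<close>.\<close>

definition dual_gen :: "gen \<Rightarrow> gen" where
  "dual_gen a = (case a of (i, m, b) \<Rightarrow> (i, - m - 1, \<not> b))"

definition comm_coeff :: "(nat \<Rightarrow> nat \<Rightarrow> complex) \<Rightarrow> gen \<Rightarrow> gen \<Rightarrow> complex" where
  "comm_coeff Q a d = (case a of (i, m, b) \<Rightarrow> case d of (j, n, b') \<Rightarrow> if b = b' then Q i j else Q j i)"

definition comm_const :: "(nat \<Rightarrow> nat \<Rightarrow> complex) \<Rightarrow> gen \<Rightarrow> gen \<Rightarrow> complex" where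
  "comm_const Q a d = (case a of (i, m, b) \<Rightarrow> if d = dual_gen a then (if b then 1 else - Q i i) else 0)"

definition number_coeff :: "(nat \<Rightarrow> nat \<Rightarrow> complex) \<Rightarrow> gen \<Rightarrow> complex" where
  "number_coeff Q a = (case a of (i, m, b) \<Rightarrow> if b then - Q i i else 1)"

definition creation :: "gen \<Rightarrow> bool" where
  "creation a \<longleftrightarrow> fst (snd a) < 0"

lemma gens_fst: "a \<in> gens l \<Longrightarrow> fst a \<in> {1..l}"
  by (cases a) (auto simp: gens_def)

lemma dual_gen_gens[simp]: "dual_gen a \<in> gens l \<longleftrightarrow> a \<in> gens l"
  by (cases a) (auto simp: dual_gen_def gens_def)

lemma dual_gen_dual_gen[simp]: "dual_gen (dual_gen a) = a"
  by (cases a) (auto simp: dual_gen_def)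

lemma fst_dual_gen[simp]: "fst (dual_gen a) = fst a"
  by (cases a) (simp add: dual_gen_def)

lemma creation_dual_gen: "creation (dual_gen a) \<longleftrightarrow> \<not> creation a"
  by (cases a) (auto simp: dual_gen_def creation_def)

lemma dual_gen_neq: "dual_gen a \<noteq> a"
  by (cases a) (simp add: dual_gen_def)

lemma dual_gen_eq_iff: "dual_gen a = dual_gen d \<longleftrightarrow> a = d"
  by (metis dual_gen_dual_gen)

lemma comm_const_other: "d \<noteq> dual_gen a \<Longrightarrow> comm_const Q a d = 0"
  by (cases a) (simp add: comm_const_def)

lemma comm_const_creations: "creation a \<Longrightarrow> creation d \<Longrightarrow> comm_const Q a d = 0"
  by (metis comm_const_other creation_dual_gen)

lemma comm_const_dual: "comm_const Q a (dual_gen a) = number_coeff Q (dual_gen a)"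
  by (cases a) (simp add: comm_const_def number_coeff_def dual_gen_def)

lemma comm_coeff_self: "comm_coeff Q a a = Q (fst a) (fst a)"
  by (cases a) (simp add: comm_coeff_def)

lemma comm_coeff_dual_self: "comm_coeff Q (dual_gen a) a = Q (fst a) (fst a)"
  "comm_coeff Q a (dual_gen a) = Q (fst a) (fst a)"
  by (cases a; simp add: comm_coeff_def dual_gen_def)+

locale reciprocal_matrix =
  fixes Q :: "nat \<Rightarrow> nat \<Rightarrow> complex" and l :: nat
  assumes reciprocal: "i \<in> {1..l} \<Longrightarrow> j \<in> {1..l} \<Longrightarrow> Q i j * Q j i = 1"
begin

lemma diagonal_sign: "i \<in> {1..l} \<Longrightarrow> Q i i = 1 \<or> Q i i = -1"
proof -
  assume "i \<in> {1..l}"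
  then have "(Q i i - 1) * (Q i i + 1) = 0" using reciprocal[of i i] by (simp add: algebra_simps)
  then show ?thesis by (auto simp: eq_neg_iff_add_eq_0)
qed

lemma comm_coeff_mult_swap: "a \<in> gens l \<Longrightarrow> d \<in> gens l \<Longrightarrow> comm_coeff Q a d * comm_coeff Q d a = 1"
  using reciprocal by (cases a; cases d) (auto simp: comm_coeff_def gens_def mult.commute)

lemma comm_coeff_nonzero: "a \<in> gens l \<Longrightarrow> d \<in> gens l \<Longrightarrow> comm_coeff Q a d \<noteq> 0"
  using comm_coeff_mult_swap by fastforce

lemma inverse_comm_coeff: "a \<in> gens l \<Longrightarrow> d \<in> gens l \<Longrightarrow> inverse (comm_coeff Q a d) = comm_coeff Q d a"
  using comm_coeff_mult_swap by (simp add: inverse_unique)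

lemma comm_coeff_dual_left: "a \<in> gens l \<Longrightarrow> d \<in> gens l \<Longrightarrow> comm_coeff Q (dual_gen a) d = comm_coeff Q d a"
  by (cases a; cases d) (simp add: comm_coeff_def dual_gen_def)

lemma number_coeff_dual: "a \<in> gens l \<Longrightarrow> number_coeff Q (dual_gen a) = - Q (fst a) (fst a) * number_coeff Q a"
  using reciprocal by (cases a) (auto simp: number_coeff_def dual_gen_def gens_def)

lemma number_coeff_comm_const:
  "c \<in> gens l \<Longrightarrow> number_coeff Q c * comm_const Q (dual_gen c) d = (if d = c then 1 else 0)"
  using reciprocal by (cases c) (auto simp: number_coeff_def comm_const_def dual_gen_def gens_def)

lemma comm_const_swap:
  assumes "a \<in> gens l" "d \<in> gens l"
  shows "comm_const Q a d = - comm_coeff Q a d * comm_const Q d a"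
proof (cases "d = dual_gen a")
  case True
  then show ?thesis
    using comm_const_dual[of Q a] comm_const_dual[of Q "dual_gen a"] number_coeff_dual[OF assms(1)]
    by (simp add: comm_coeff_dual_self)
next
  case False
  then have "a \<noteq> dual_gen d" by auto
  then show ?thesis using False by (simp add: comm_const_other)
qed

end

locale reciprocal_aq_rep = aq_rep + reciprocal_matrix Q l
begin

lemma Y_X_comm:
  assumes "i \<in> {1..l}" "j \<in> {1..l}" "v \<in> carrier M"
  shows "Y i m (X j n v)
    = Q j i \<odot>\<^bsub>M\<^esub> X j n (Y i m v) \<oplus>\<^bsub>M\<^esub> (if i = j \<and> m + n + 1 = 0 then (- Q i i) \<odot>\<^bsub>M\<^esub> v else \<zero>\<^bsub>M\<^esub>)"
proof -
  have "Q j i \<odot>\<^bsub>M\<^esub> X j n (Y i m v)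
      = Y i m (X j n v) \<oplus>\<^bsub>M\<^esub> (if i = j \<and> m + n + 1 = 0 then Q j i \<odot>\<^bsub>M\<^esub> v else \<zero>\<^bsub>M\<^esub>)"
    using assms reciprocal[of j i] by (simp add: X_Y_comm[OF assms(2,1,3)] smult_r_distr csmult_mult[symmetric])
  then show ?thesis
    using assms csmult_cancel[of v "Q i i"] by (auto simp: M.a_assoc)
qed

lemma gen_op_comm:
  assumes a: "a \<in> gens l" and d: "d \<in> gens l" and v: "v \<in> carrier M"
  shows "gen_op X Y a (gen_op X Y d v)
    = comm_coeff Q a d \<odot>\<^bsub>M\<^esub> gen_op X Y d (gen_op X Y a v) \<oplus>\<^bsub>M\<^esub> comm_const Q a d \<odot>\<^bsub>M\<^esub> v"
proof -
  obtain i m b where a': "a = (i, m, b)" by (cases a)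
  obtain j n b' where d': "d = (j, n, b')" by (cases d)
  have ij: "i \<in> {1..l}" "j \<in> {1..l}" using a d a' d' by auto
  have "d = dual_gen a \<longleftrightarrow> i = j \<and> m + n + 1 = 0 \<and> b' = (\<not> b)"
    using a' d' by (auto simp: dual_gen_def)
  then show ?thesis
    using X_X_comm[OF ij v] Y_Y_comm[OF ij v] X_Y_comm[OF ij v] Y_X_comm[OF ij v] a' d' v ij
    by (cases b; cases b') (auto simp: comm_coeff_def comm_const_def)
qed

end

section \<open>Vacuum modules are irreducible\<close>

locale vacuum_rep = reciprocal_aq_rep +
  fixes w :: 'm
  assumes vacuum_module: "vacuum_module Q l M X Y w"
begin

definition creations :: "gen set" where
  "creations = {a \<in> gens l. creation a}"

definition vac_comb :: "(complex \<times> gen list) list \<Rightarrow> 'm" where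
  "vac_comb L = foldr (\<lambda>(c, u) acc. c \<odot>\<^bsub>M\<^esub> word_op X Y u w \<oplus>\<^bsub>M\<^esub> acc) L \<zero>\<^bsub>M\<^esub>"

definition gen_words :: "(complex \<times> gen list) list \<Rightarrow> bool" where
  "gen_words L \<longleftrightarrow> (\<forall>(c, u) \<in> set L. set u \<subseteq> gens l)"

definition creation_words :: "nat \<Rightarrow> (complex \<times> gen list) list \<Rightarrow> bool" where
  "creation_words k L \<longleftrightarrow> (\<forall>(c, u) \<in> set L. set u \<subseteq> creations \<and> length u \<le> k)"

lemma vacuum_closed[simp]: "w \<in> carrier M"
  using vacuum_module by (simp add: vacuum_module_def is_vacuum_def)

lemma annihilator_vacuum: "a \<in> gens l \<Longrightarrow> \<not> creation a \<Longrightarrow> gen_op X Y a w = \<zero>\<^bsub>M\<^esub>"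
  using vacuum_module by (cases a) (auto simp: vacuum_module_def is_vacuum_def gen_op_def creation_def)

lemma vacuum_generates: "AQ_submodule l N M X Y \<Longrightarrow> w \<in> N \<Longrightarrow> carrier M \<subseteq> N"
  using vacuum_module by (simp add: vacuum_module_def generates_def)

lemma creations_gens: "set u \<subseteq> creations \<Longrightarrow> set u \<subseteq> gens l"
  by (auto simp: creations_def)

lemma creation_words_gen_words: "creation_words k L \<Longrightarrow> gen_words L"
  by (auto simp: creation_words_def gen_words_def creations_def)

lemma vac_comb_Nil[simp]: "vac_comb [] = \<zero>\<^bsub>M\<^esub>"
  and vac_comb_Cons[simp]: "vac_comb ((c, u) # L) = c \<odot>\<^bsub>M\<^esub> word_op X Y u w \<oplus>\<^bsub>M\<^esub> vac_comb L"
  by (simp_all add: vac_comb_def)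

lemma gen_words_Nil[simp]: "gen_words []"
  and gen_words_Cons[simp]: "gen_words ((c, u) # L) \<longleftrightarrow> set u \<subseteq> gens l \<and> gen_words L"
  by (simp_all add: gen_words_def)

lemma gen_words_map_coeff: "gen_words L \<Longrightarrow> gen_words (map (\<lambda>(c', u). (f c' u, u)) L)"
  by (auto simp: gen_words_def)

lemma gen_words_map_Cons: "a \<in> gens l \<Longrightarrow> gen_words L \<Longrightarrow> gen_words (map (\<lambda>(c, u). (c, a # u)) L)"
  by (fastforce simp: gen_words_def simp del: gens_iff)

lemma vac_comb_closed[simp]: "gen_words L \<Longrightarrow> vac_comb L \<in> carrier M"
  by (induction L) auto

lemma vac_comb_append: "gen_words L1 \<Longrightarrow> gen_words L2 \<Longrightarrow> vac_comb (L1 @ L2) = vac_comb L1 \<oplus>\<^bsub>M\<^esub> vac_comb L2"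
  by (induction L1) (auto simp: M.a_assoc)

lemma smult_vac_comb: "gen_words L \<Longrightarrow> c \<odot>\<^bsub>M\<^esub> vac_comb L = vac_comb (map (\<lambda>(c', u). (c * c', u)) L)"
  by (induction L) (auto simp: smult_r_distr csmult_mult)

lemma gen_op_vac_comb:
  "a \<in> gens l \<Longrightarrow> gen_words L \<Longrightarrow> gen_op X Y a (vac_comb L) = vac_comb (map (\<lambda>(c, u). (c, a # u)) L)"
  by (induction L) (auto simp: gen_op_add gen_op_smult)

lemma creation_words_append: "creation_words k1 L1 \<Longrightarrow> creation_words k2 L2 \<Longrightarrow> creation_words (max k1 k2) (L1 @ L2)"
  unfolding creation_words_def by fastforce

lemma creation_words_map_coeff: "creation_words k L \<Longrightarrow> creation_words k (map (\<lambda>(c', u). (f c' u, u)) L)"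
  unfolding creation_words_def by fastforce

lemma annihilator_creation_word:
  assumes a: "a \<in> gens l" "\<not> creation a" and u: "set u \<subseteq> creations"
  shows "\<exists>L. gen_op X Y a (word_op X Y u w) = vac_comb L \<and> (\<forall>(c, x) \<in> set L. set x \<subseteq> creations \<and> length x < length u)"
  using u
proof (induction u)
  case Nil
  show ?case by (rule exI[of _ "[]"]) (simp add: annihilator_vacuum[OF a])
next
  case (Cons d u)
  then obtain L where L: "gen_op X Y a (word_op X Y u w) = vac_comb L"
    "\<forall>(c, x) \<in> set L. set x \<subseteq> creations \<and> length x < length u"
    by auto
  have d: "d \<in> gens l" "d \<in> creations" and u: "set u \<subseteq> gens l"
    using Cons.prems by (auto simp: creations_def)
  have L_words: "gen_words L" using L(2) by (auto simp: gen_words_def creations_def)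
  let ?L' = "map (\<lambda>(c', x). (comm_coeff Q a d * c', x)) (map (\<lambda>(c, x). (c, d # x)) L) @ [(comm_const Q a d, u)]"
  have "gen_op X Y a (word_op X Y (d # u) w)
      = comm_coeff Q a d \<odot>\<^bsub>M\<^esub> gen_op X Y d (vac_comb L) \<oplus>\<^bsub>M\<^esub> comm_const Q a d \<odot>\<^bsub>M\<^esub> word_op X Y u w"
    using gen_op_comm[OF a(1) d(1), of "word_op X Y u w"] u L(1) by simp
  also have "\<dots> = vac_comb ?L'"
    using u L_words d gen_words_map_Cons[OF d(1) L_words]
    by (simp add: vac_comb_append gen_words_map_coeff smult_vac_comb gen_op_vac_comb del: map_map)
  finally have "gen_op X Y a (word_op X Y (d # u) w) = vac_comb ?L'" .
  moreover have "\<forall>(c, x) \<in> set ?L'. set x \<subseteq> creations \<and> length x < length (d # u)"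
    using L(2) d(2) Cons.prems by fastforce
  ultimately show ?case by blast
qed

lemma annihilator_vac_comb:
  assumes a: "a \<in> gens l" "\<not> creation a" and L: "creation_words k L"
  shows "\<exists>L'. gen_op X Y a (vac_comb L) = vac_comb L' \<and> (\<forall>(c, x) \<in> set L'. set x \<subseteq> creations \<and> length x < k)"
  using L
proof (induction L)
  case Nil
  show ?case by (rule exI[of _ "[]"]) (simp add: a)
next
  case (Cons p L)
  obtain c u where p: "p = (c, u)" by (cases p)
  have u: "set u \<subseteq> creations" "length u \<le> k" and L: "creation_words k L"
    using Cons.prems p by (auto simp: creation_words_def)
  obtain L1 where L1: "gen_op X Y a (vac_comb L) = vac_comb L1" "\<forall>(c, x) \<in> set L1. set x \<subseteq> creations \<and> length x < k"
    using Cons.IH L by auto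
  obtain L2 where L2: "gen_op X Y a (word_op X Y u w) = vac_comb L2"
      "\<forall>(c, x) \<in> set L2. set x \<subseteq> creations \<and> length x < length u"
    using annihilator_creation_word[OF a u(1)] by auto
  have "gen_words L1" "gen_words L2" using L1(2) L2(2) by (auto simp: gen_words_def creations_def)
  then have "gen_op X Y a (vac_comb (p # L)) = vac_comb (map (\<lambda>(c', x). (c * c', x)) L2 @ L1)"
    using p a L1(1) L2(1) creations_gens[OF u(1)] creation_words_gen_words[OF L]
    by (simp add: gen_op_add gen_op_smult smult_vac_comb vac_comb_append gen_words_map_coeff)
  then show ?case using L1(2) L2(2) u(2)
    by (intro exI[of _ "map (\<lambda>(c', x). (c * c', x)) L2 @ L1"]) auto
qed

definition creation_span :: "'m set" where
  "creation_span = {vac_comb L | L k. creation_words k L}"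

lemma creation_span_submodule: "submodule creation_span CC M"
proof (rule submoduleI)
  show "creation_span \<subseteq> carrier M"
    by (auto simp: creation_span_def dest: creation_words_gen_words)
  show "\<zero>\<^bsub>M\<^esub> \<in> creation_span"
    unfolding creation_span_def by (auto intro!: exI[of _ "[]"] simp: creation_words_def)
  show "x \<oplus>\<^bsub>M\<^esub> y \<in> creation_span" if x: "x \<in> creation_span" and y: "y \<in> creation_span" for x y
  proof -
    obtain L1 k1 L2 k2 where "x = vac_comb L1" "creation_words k1 L1" "y = vac_comb L2" "creation_words k2 L2"
      using x y unfolding creation_span_def by blast
    then show ?thesis unfolding creation_span_def
      by (auto simp: vac_comb_append creation_words_gen_words intro!: exI[of _ "L1 @ L2"] creation_words_append)
  qed
  show smult: "c \<odot>\<^bsub>M\<^esub> x \<in> creation_span" if x: "x \<in> creation_span" for c x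
  proof -
    obtain L k where "x = vac_comb L" "creation_words k L"
      using x unfolding creation_span_def by blast
    then show ?thesis unfolding creation_span_def
      by (auto simp: smult_vac_comb creation_words_gen_words
          intro!: exI[of _ "map (\<lambda>(c', u). (c * c', u)) L"] creation_words_map_coeff)
  qed
  show "\<ominus>\<^bsub>M\<^esub> x \<in> creation_span" if "x \<in> creation_span" for x
    using that smult[of x "-1"] csmult_minus_one \<open>creation_span \<subseteq> carrier M\<close> by auto
qed

lemma gen_op_creation_span: "a \<in> gens l \<Longrightarrow> v \<in> creation_span \<Longrightarrow> gen_op X Y a v \<in> creation_span"
proof -
  assume a: "a \<in> gens l" and "v \<in> creation_span"
  then obtain k L where v: "v = vac_comb L" "creation_words k L" by (auto simp: creation_span_def)
  show ?thesis
  proof (cases "creation a")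
    case True
    have "gen_op X Y a v = vac_comb (map (\<lambda>(c, u). (c, a # u)) L)"
      using v a by (simp add: gen_op_vac_comb creation_words_gen_words)
    moreover have "creation_words (Suc k) (map (\<lambda>(c, u). (c, a # u)) L)"
      using v(2) a True unfolding creation_words_def creations_def by (fastforce simp del: gens_iff)
    ultimately show ?thesis by (auto simp: creation_span_def)
  next
    case False
    then obtain L' where L': "gen_op X Y a v = vac_comb L'" "\<forall>(c, x) \<in> set L'. set x \<subseteq> creations \<and> length x < k"
      using annihilator_vac_comb[OF a False v(2)] v(1) by auto
    then have "creation_words k L'" by (fastforce simp: creation_words_def)
    then show ?thesis using L'(1) unfolding creation_span_def by blast
  qed
qed

lemma creation_span_eq_carrier: "creation_span = carrier M"
proof
  show "creation_span \<subseteq> carrier M"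
    using submoduleE(1)[OF creation_span_submodule] .
  have "w \<in> creation_span"
    unfolding creation_span_def by (auto simp: creation_words_def intro!: exI[of _ "[(1, [])]"])
  moreover have "AQ_submodule l creation_span M X Y"
    using creation_span_submodule gen_op_creation_span[of "(i, n, True)" for i n]
      gen_op_creation_span[of "(i, n, False)" for i n]
    by (auto simp: AQ_submodule_def)
  ultimately show "carrier M \<subseteq> creation_span" by (rule vacuum_generates[rotated])
qed

definition number_term :: "gen \<Rightarrow> 'm \<Rightarrow> 'm" where
  "number_term c x = number_coeff Q c \<odot>\<^bsub>M\<^esub> gen_op X Y c (gen_op X Y (dual_gen c) x)"

definition number_op :: "gen list \<Rightarrow> 'm \<Rightarrow> 'm" where
  "number_op cs x = foldr (\<lambda>c acc. number_term c x \<oplus>\<^bsub>M\<^esub> acc) cs \<zero>\<^bsub>M\<^esub>"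

lemma number_op_Nil[simp]: "number_op [] x = \<zero>\<^bsub>M\<^esub>"
  and number_op_Cons[simp]: "number_op (c # cs) x = number_term c x \<oplus>\<^bsub>M\<^esub> number_op cs x"
  by (simp_all add: number_op_def)

lemma number_term_closed[simp]: "c \<in> gens l \<Longrightarrow> x \<in> carrier M \<Longrightarrow> number_term c x \<in> carrier M"
  by (simp add: number_term_def)

lemma number_term_add: "c \<in> gens l \<Longrightarrow> x \<in> carrier M \<Longrightarrow> y \<in> carrier M \<Longrightarrow>
    number_term c (x \<oplus>\<^bsub>M\<^esub> y) = number_term c x \<oplus>\<^bsub>M\<^esub> number_term c y"
  by (simp add: number_term_def gen_op_add smult_r_distr)

lemma number_term_smult: "c \<in> gens l \<Longrightarrow> x \<in> carrier M \<Longrightarrow> number_term c (a \<odot>\<^bsub>M\<^esub> x) = a \<odot>\<^bsub>M\<^esub> number_term c x"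
  by (simp add: number_term_def gen_op_smult csmult_mult[symmetric] mult.commute)

lemma number_op_closed[simp]: "set cs \<subseteq> gens l \<Longrightarrow> x \<in> carrier M \<Longrightarrow> number_op cs x \<in> carrier M"
  by (induction cs) auto

lemma number_op_add: "set cs \<subseteq> gens l \<Longrightarrow> x \<in> carrier M \<Longrightarrow> y \<in> carrier M \<Longrightarrow>
    number_op cs (x \<oplus>\<^bsub>M\<^esub> y) = number_op cs x \<oplus>\<^bsub>M\<^esub> number_op cs y"
  by (induction cs) (auto simp: number_term_add M.a_ac)

lemma number_op_smult: "set cs \<subseteq> gens l \<Longrightarrow> x \<in> carrier M \<Longrightarrow> number_op cs (a \<odot>\<^bsub>M\<^esub> x) = a \<odot>\<^bsub>M\<^esub> number_op cs x"
  by (induction cs) (auto simp: number_term_smult smult_r_distr)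

lemma number_op_zero[simp]: "set cs \<subseteq> gens l \<Longrightarrow> number_op cs \<zero>\<^bsub>M\<^esub> = \<zero>\<^bsub>M\<^esub>"
  by (induction cs) (auto simp: number_term_def)

lemma number_op_annihilated:
  assumes "\<forall>a\<in>gens l. \<not> creation a \<longrightarrow> gen_op X Y a v = \<zero>\<^bsub>M\<^esub>" and "set cs \<subseteq> creations"
  shows "number_op cs v = \<zero>\<^bsub>M\<^esub>"
  using assms(2)
proof (induction cs)
  case (Cons c cs)
  then have "c \<in> gens l" "gen_op X Y (dual_gen c) v = \<zero>\<^bsub>M\<^esub>"
    using assms(1) creation_dual_gen[of c] by (auto simp: creations_def)
  then show ?case using Cons by (simp add: number_term_def creations_def)
qed simp

lemma number_term_gen_op:
  assumes c: "c \<in> creations" and d: "d \<in> creations" and y: "y \<in> carrier M"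
  shows "number_term c (gen_op X Y d y)
    = gen_op X Y d (number_term c y) \<oplus>\<^bsub>M\<^esub> (if c = d then gen_op X Y d y else \<zero>\<^bsub>M\<^esub>)"
proof -
  have cd: "c \<in> gens l" "d \<in> gens l" "dual_gen c \<in> gens l" "creation c" "creation d"
    using c d by (auto simp: creations_def)
  let ?z = "gen_op X Y (dual_gen c) y"
  have z: "?z \<in> carrier M" using cd y by simp
  have "gen_op X Y c (gen_op X Y (dual_gen c) (gen_op X Y d y))
      = comm_coeff Q (dual_gen c) d \<odot>\<^bsub>M\<^esub> gen_op X Y c (gen_op X Y d ?z)
        \<oplus>\<^bsub>M\<^esub> comm_const Q (dual_gen c) d \<odot>\<^bsub>M\<^esub> gen_op X Y c y"
    using gen_op_comm[OF cd(3,2) y] cd z y by (simp add: gen_op_add gen_op_smult)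
  also have "gen_op X Y c (gen_op X Y d ?z) = comm_coeff Q c d \<odot>\<^bsub>M\<^esub> gen_op X Y d (gen_op X Y c ?z)"
    using gen_op_comm[OF cd(1,2) z] comm_const_creations[OF cd(4,5)] cd z by simp
  finally have "gen_op X Y c (gen_op X Y (dual_gen c) (gen_op X Y d y))
      = gen_op X Y d (gen_op X Y c ?z) \<oplus>\<^bsub>M\<^esub> comm_const Q (dual_gen c) d \<odot>\<^bsub>M\<^esub> gen_op X Y c y"
    using comm_coeff_dual_left[OF cd(1,2)] comm_coeff_mult_swap[OF cd(2,1)] cd z
    by (simp add: csmult_mult[symmetric])
  then have "number_term c (gen_op X Y d y)
      = gen_op X Y d (number_term c y)
        \<oplus>\<^bsub>M\<^esub> (number_coeff Q c * comm_const Q (dual_gen c) d) \<odot>\<^bsub>M\<^esub> gen_op X Y c y"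
    unfolding number_term_def using cd z y by (simp add: smult_r_distr csmult_mult gen_op_smult)
  then show ?thesis using number_coeff_comm_const[OF cd(1)] cd y by auto
qed

lemma number_op_gen_op_notin:
  assumes "set cs \<subseteq> creations" "d \<in> creations" "d \<notin> set cs" "y \<in> carrier M"
  shows "number_op cs (gen_op X Y d y) = gen_op X Y d (number_op cs y)"
  using assms
proof (induction cs)
  case (Cons c cs)
  then have "c \<in> gens l" "d \<in> gens l" "set cs \<subseteq> gens l" "c \<noteq> d"
    by (auto simp: creations_def)
  then show ?case using Cons by (simp add: number_term_gen_op gen_op_add)
qed (simp add: creations_def)

lemma number_op_gen_op_in:
  assumes "distinct cs" "set cs \<subseteq> creations" "d \<in> set cs" "y \<in> carrier M"
  shows "number_op cs (gen_op X Y d y) = gen_op X Y d (number_op cs y) \<oplus>\<^bsub>M\<^esub> gen_op X Y d y"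
  using assms
proof (induction cs)
  case (Cons c cs)
  have g: "c \<in> gens l" "d \<in> gens l" "set cs \<subseteq> gens l" "d \<in> creations"
    using Cons.prems by (auto simp: creations_def)
  show ?case
  proof (cases "c = d")
    case True
    then have "number_op cs (gen_op X Y d y) = gen_op X Y d (number_op cs y)"
      using Cons.prems g by (intro number_op_gen_op_notin) auto
    then show ?thesis using True Cons.prems g by (simp add: number_term_gen_op gen_op_add M.a_ac)
  next
    case False
    then show ?thesis using Cons g by (simp add: number_term_gen_op gen_op_add M.a_ac)
  qed
qed simp

lemma number_op_word:
  assumes "distinct cs" "set cs \<subseteq> creations" "set u \<subseteq> set cs"
  shows "number_op cs (word_op X Y u w) = of_nat (length u) \<odot>\<^bsub>M\<^esub> word_op X Y u w"
  using assms(3)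
proof (induction u)
  case Nil
  then show ?case using number_op_annihilated[OF _ assms(2)] annihilator_vacuum by simp
next
  case (Cons d u)
  have g: "d \<in> gens l" "d \<in> set cs" "set u \<subseteq> gens l"
    using Cons.prems assms(2) by (auto simp: creations_def)
  have "number_op cs (word_op X Y (d # u) w)
      = gen_op X Y d (number_op cs (word_op X Y u w)) \<oplus>\<^bsub>M\<^esub> gen_op X Y d (word_op X Y u w)"
    using number_op_gen_op_in[OF assms(1,2) g(2)] g by simp
  also have "\<dots> = (of_nat (length u) + 1) \<odot>\<^bsub>M\<^esub> gen_op X Y d (word_op X Y u w)"
    using Cons g by (simp add: gen_op_smult csmult_add)
  finally show ?case by (simp add: add.commute)
qed

lemma number_op_vac_comb:
  assumes "distinct cs" "set cs \<subseteq> creations" "\<forall>(c, u) \<in> set L. set u \<subseteq> set cs"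
  shows "number_op cs (vac_comb L) = vac_comb (map (\<lambda>(c, u). (c * of_nat (length u), u)) L)"
  using assms(3)
proof (induction L)
  case Nil
  have "set cs \<subseteq> gens l" using assms by (auto simp: creations_def)
  then show ?case by simp
next
  case (Cons p L)
  obtain c u where p: "p = (c, u)" by (cases p)
  have g: "set cs \<subseteq> gens l" using assms by (auto simp: creations_def)
  have u: "set u \<subseteq> set cs" using Cons.prems p by auto
  have "gen_words L" using Cons.prems g by (fastforce simp: gen_words_def)
  then show ?case using Cons p u g number_op_word[OF assms(1,2) u]
    by (auto simp: number_op_add number_op_smult csmult_mult mult.commute)
qed

lemma vac_comb_empty_words: "\<forall>(c, u) \<in> set L. u = [] \<Longrightarrow> vac_comb L = sum_list (map fst L) \<odot>\<^bsub>M\<^esub> w"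
  by (induction L) (auto simp: csmult_add)

lemma vac_comb_add_smult: "gen_words L \<Longrightarrow>
    vac_comb L \<oplus>\<^bsub>M\<^esub> s \<odot>\<^bsub>M\<^esub> vac_comb (map (\<lambda>(c, u). (c * h u, u)) L)
    = vac_comb (map (\<lambda>(c, u). (c + s * (c * h u), u)) L)"
proof (induction L)
  case (Cons p L)
  obtain c u where p: "p = (c, u)" by (cases p)
  have u: "set u \<subseteq> gens l" and L: "gen_words L" using Cons.prems p by auto
  let ?e = "word_op X Y u w"
  have e: "?e \<in> carrier M" using u by simp
  have "vac_comb (p # L) \<oplus>\<^bsub>M\<^esub> s \<odot>\<^bsub>M\<^esub> vac_comb (map (\<lambda>(c, u). (c * h u, u)) (p # L))
     = (c \<odot>\<^bsub>M\<^esub> ?e \<oplus>\<^bsub>M\<^esub> (s * (c * h u)) \<odot>\<^bsub>M\<^esub> ?e) \<oplus>\<^bsub>M\<^esub>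
       (vac_comb L \<oplus>\<^bsub>M\<^esub> s \<odot>\<^bsub>M\<^esub> vac_comb (map (\<lambda>(c, u). (c * h u, u)) L))"
    using p e L gen_words_map_coeff[OF L] by (simp add: smult_r_distr csmult_mult M.a_ac)
  then show ?case using Cons.IH[OF L] p e by (simp add: csmult_add)
qed simp

lemma vac_comb_filter: "gen_words L \<Longrightarrow> \<forall>(c, u) \<in> set L. \<not> P (c, u) \<longrightarrow> c = 0 \<Longrightarrow> vac_comb (filter P L) = vac_comb L"
proof (induction L)
  case (Cons p L)
  then show ?case by (cases p) auto
qed simp

text \<open>A combination of words of length at most \<open>k + 1\<close> that is killed by the number operator
  equals the combination obtained by adding \<open>-1/(k + 1)\<close> times its image under the number
  operator, in which the words of length \<open>k + 1\<close> have coefficient zero.\<close>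

lemma number_op_kernel_lower_length:
  assumes cs: "distinct cs" "set cs \<subseteq> creations"
    and L: "\<forall>(c, u) \<in> set L. set u \<subseteq> set cs \<and> length u \<le> Suc k"
    and N: "number_op cs (vac_comb L) = \<zero>\<^bsub>M\<^esub>"
  shows "\<exists>L'. vac_comb L' = vac_comb L \<and> (\<forall>(c, u) \<in> set L'. set u \<subseteq> set cs \<and> length u \<le> k)"
proof -
  have L_words: "gen_words L" using L cs by (fastforce simp: gen_words_def creations_def)
  define s where "s = - 1 / (of_nat (Suc k) :: complex)"
  define L1 where "L1 = map (\<lambda>(c, u). (c + s * (c * of_nat (length u)), u)) L"
  have "\<forall>(c, u) \<in> set L. set u \<subseteq> set cs" using L by blast
  then have "number_op cs (vac_comb L) = vac_comb (map (\<lambda>(c, u). (c * of_nat (length u), u)) L)"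
    by (rule number_op_vac_comb[OF cs])
  then have "vac_comb L1 = vac_comb L \<oplus>\<^bsub>M\<^esub> s \<odot>\<^bsub>M\<^esub> number_op cs (vac_comb L)"
    unfolding L1_def by (simp add: vac_comb_add_smult[OF L_words])
  then have L1: "vac_comb L1 = vac_comb L" using N L_words by simp
  define L2 where "L2 = filter (\<lambda>(c, u). length u \<noteq> Suc k) L1"
  have "c + s * (c * of_nat (Suc k)) = 0" for c
    unfolding s_def by (simp del: of_nat_Suc)
  then have "\<forall>(c, u) \<in> set L1. \<not> (\<lambda>(c, u). length u \<noteq> Suc k) (c, u) \<longrightarrow> c = 0"
    unfolding L1_def by (auto simp del: of_nat_Suc)
  then have "vac_comb L2 = vac_comb L"
    unfolding L2_def using vac_comb_filter[OF gen_words_map_coeff[OF L_words]] L1 by (simp add: L1_def)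
  moreover have "\<forall>(c, u) \<in> set L2. set u \<subseteq> set cs \<and> length u \<le> k"
  proof (clarify)
    fix c u assume "(c, u) \<in> set L2"
    then obtain c' where "(c', u) \<in> set L" "length u \<noteq> Suc k" unfolding L2_def L1_def by auto
    then show "set u \<subseteq> set cs \<and> length u \<le> k" using L by fastforce
  qed
  ultimately show ?thesis by blast
qed

lemma vac_comb_number_op_kernel:
  assumes cs: "distinct cs" "set cs \<subseteq> creations"
  shows "\<forall>(c, u) \<in> set L. set u \<subseteq> set cs \<and> length u \<le> k \<Longrightarrow> number_op cs (vac_comb L) = \<zero>\<^bsub>M\<^esub>
    \<Longrightarrow> \<exists>c. vac_comb L = c \<odot>\<^bsub>M\<^esub> w"
proof (induction k arbitrary: L)
  case 0
  then have "\<forall>(c, u) \<in> set L. u = []" by auto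
  then show ?case using vac_comb_empty_words by blast
next
  case (Suc k)
  then obtain L' where L': "vac_comb L' = vac_comb L" "\<forall>(c, u) \<in> set L'. set u \<subseteq> set cs \<and> length u \<le> k"
    using number_op_kernel_lower_length[OF cs] by blast
  moreover have "number_op cs (vac_comb L') = \<zero>\<^bsub>M\<^esub>" using Suc.prems(2) L'(1) by simp
  ultimately obtain c where "vac_comb L' = c \<odot>\<^bsub>M\<^esub> w" using Suc.IH[OF L'(2)] by blast
  then show ?case using L'(1) by auto
qed

lemma annihilated_eq_smult_vacuum:
  assumes v: "v \<in> carrier M" and ann: "\<forall>a\<in>gens l. \<not> creation a \<longrightarrow> gen_op X Y a v = \<zero>\<^bsub>M\<^esub>"
  shows "\<exists>c. v = c \<odot>\<^bsub>M\<^esub> w"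
proof -
  have "v \<in> creation_span" using v creation_span_eq_carrier by simp
  then obtain k L where L: "v = vac_comb L" "creation_words k L"
    unfolding creation_span_def by blast
  define cs where "cs = remdups (concat (map snd L))"
  have cs: "distinct cs" "set cs \<subseteq> creations"
    using L(2) unfolding cs_def creation_words_def by fastforce+
  have "\<forall>(c, u) \<in> set L. set u \<subseteq> set cs \<and> length u \<le> k"
    using L(2) unfolding cs_def creation_words_def by force
  then show ?thesis
    using vac_comb_number_op_kernel[OF cs] number_op_annihilated[OF ann cs(2)] L(1) by blast
qed

lemma AQ_submodule_annihilated:
  assumes N: "AQ_submodule l N M X Y" and v: "v \<in> N" "v \<noteq> \<zero>\<^bsub>M\<^esub>"
  obtains u where "u \<in> N" "u \<noteq> \<zero>\<^bsub>M\<^esub>" "\<forall>a\<in>gens l. \<not> creation a \<longrightarrow> gen_op X Y a u = \<zero>\<^bsub>M\<^esub>"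
proof -
  have N_carrier: "N \<subseteq> carrier M" using N submoduleE(1) by (auto simp: AQ_submodule_def)
  have N_gen_op: "gen_op X Y a x \<in> N" if "a \<in> gens l" "x \<in> N" for a x
    using N that by (cases a) (auto simp: AQ_submodule_def gen_op_def)
  define P where "P = (\<lambda>k. \<exists>L. creation_words k L \<and> vac_comb L \<in> N \<and> vac_comb L \<noteq> \<zero>\<^bsub>M\<^esub>)"
  have "v \<in> creation_span" using v N_carrier creation_span_eq_carrier by auto
  then have "\<exists>k. P k" using v unfolding P_def creation_span_def by blast
  then have "P (LEAST k. P k)" by (rule LeastI_ex)
  then obtain L where L: "creation_words (LEAST k. P k) L" "vac_comb L \<in> N" "vac_comb L \<noteq> \<zero>\<^bsub>M\<^esub>"
    unfolding P_def by blast
  have "gen_op X Y a (vac_comb L) = \<zero>\<^bsub>M\<^esub>" if a: "a \<in> gens l" "\<not> creation a" for a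
  proof (rule ccontr)
    assume nz: "gen_op X Y a (vac_comb L) \<noteq> \<zero>\<^bsub>M\<^esub>"
    obtain L' where L': "gen_op X Y a (vac_comb L) = vac_comb L'"
        "\<forall>(c, x) \<in> set L'. set x \<subseteq> creations \<and> length x < (LEAST k. P k)"
      using annihilator_vac_comb[OF a L(1)] by blast
    then have "L' \<noteq> []" using nz by auto
    then have pos: "(LEAST k. P k) > 0" using L'(2) by (cases L') auto
    have "creation_words ((LEAST k. P k) - 1) L'" using L'(2) pos unfolding creation_words_def by fastforce
    then have "P ((LEAST k. P k) - 1)" using nz L' N_gen_op[OF a(1) L(2)] unfolding P_def by auto
    then show False using Least_le[of P] pos by fastforce
  qed
  then show ?thesis using that L(2,3) by blast
qed

theorem vacuum_module_irreducible:
  assumes nontrivial: "carrier M \<noteq> {\<zero>\<^bsub>M\<^esub>}"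
  shows "AQ_irreducible Q l M X Y"
  unfolding AQ_irreducible_def
proof (intro conjI allI impI aq nontrivial)
  fix N assume N: "AQ_submodule l N M X Y"
  have N_sub: "submodule N CC M" using N by (simp add: AQ_submodule_def)
  show "N = {\<zero>\<^bsub>M\<^esub>} \<or> N = carrier M"
  proof (cases "N \<subseteq> {\<zero>\<^bsub>M\<^esub>}")
    case True
    then show ?thesis using submodule_zero_closed[OF N_sub] by blast
  next
    case False
    then obtain v where "v \<in> N" "v \<noteq> \<zero>\<^bsub>M\<^esub>" by blast
    then obtain u where u: "u \<in> N" "u \<noteq> \<zero>\<^bsub>M\<^esub>" "\<forall>a\<in>gens l. \<not> creation a \<longrightarrow> gen_op X Y a u = \<zero>\<^bsub>M\<^esub>"
      using AQ_submodule_annihilated[OF N] by blast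
    moreover have "u \<in> carrier M" using u(1) submoduleE(1)[OF N_sub] by blast
    ultimately obtain c where c: "u = c \<odot>\<^bsub>M\<^esub> w" "c \<noteq> 0"
      using annihilated_eq_smult_vacuum by fastforce
    then have "w = (1 / c) \<odot>\<^bsub>M\<^esub> u" by (simp add: csmult_mult[symmetric])
    then have "w \<in> N" using submoduleE(4)[OF N_sub, of "1 / c" u] u(1) by simp
    then show ?thesis using vacuum_generates[OF N] submoduleE(1)[OF N_sub] by blast
  qed
qed

end

section \<open>The vacuum module \<open>V\<^sub>Q\<close>\<close>

context
  fixes Q :: "nat \<Rightarrow> nat \<Rightarrow> complex" and l :: nat
begin

abbreviation cls :: "fa \<Rightarrow> fa set" where
  "cls \<equiv> vq_class Q l"

abbreviation NQ_equiv :: "fa \<Rightarrow> fa \<Rightarrow> bool" where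
  "NQ_equiv f g \<equiv> fa_add f (fa_smult (-1) g) \<in> NQ Q l"

lemma NQ_equiv_refl: "NQ_equiv f f"
  by (simp add: fa_add_minus_self NQ.zero)

lemma NQ_equiv_sym: "NQ_equiv f g \<Longrightarrow> NQ_equiv g f"
  using NQ.smult[of "fa_add f (fa_smult (-1) g)" Q l "-1"] by (simp add: fa_defs)

lemma NQ_equiv_trans: "NQ_equiv f g \<Longrightarrow> NQ_equiv g h \<Longrightarrow> NQ_equiv f h"
  using NQ.add[of "fa_add f (fa_smult (-1) g)" Q l "fa_add g (fa_smult (-1) h)"] by (simp add: fa_defs)

lemma NQ_equiv_add: "NQ_equiv f f' \<Longrightarrow> NQ_equiv g g' \<Longrightarrow> NQ_equiv (fa_add f g) (fa_add f' g')"
proof -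
  assume "NQ_equiv f f'" "NQ_equiv g g'"
  then have "fa_add (fa_add f (fa_smult (-1) f')) (fa_add g (fa_smult (-1) g')) \<in> NQ Q l" by (rule NQ.add)
  then show ?thesis by (simp add: fa_defs algebra_simps)
qed

lemma NQ_equiv_smult: "NQ_equiv f f' \<Longrightarrow> NQ_equiv (fa_smult c f) (fa_smult c f')"
  using NQ.smult[of "fa_add f (fa_smult (-1) f')" Q l c] by (simp add: fa_defs algebra_simps)

lemma NQ_equiv_mult: "x \<in> FA l \<Longrightarrow> NQ_equiv f f' \<Longrightarrow> NQ_equiv (fa_mult x f) (fa_mult x f')"
  using NQ_mult_left[of "fa_add f (fa_smult (-1) f')" Q l x] by (simp add: fa_mult_add_right fa_mult_smult_right)

lemma cls_eqI: "f \<in> FA l \<Longrightarrow> g \<in> FA l \<Longrightarrow> NQ_equiv f g \<Longrightarrow> cls f = cls g"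
  unfolding vq_class_def using NQ_equiv_trans NQ_equiv_sym by blast

lemma cls_eqD: "f \<in> FA l \<Longrightarrow> cls f = cls g \<Longrightarrow> NQ_equiv f g"
  using NQ_equiv_refl[of f] unfolding vq_class_def by blast

lemma vq_rep_cls: "f \<in> FA l \<Longrightarrow> vq_rep (cls f) \<in> FA l \<and> NQ_equiv (vq_rep (cls f)) f"
proof -
  assume "f \<in> FA l"
  then have "f \<in> cls f" by (simp add: vq_class_def NQ_equiv_refl)
  then have "vq_rep (cls f) \<in> cls f" unfolding vq_rep_def by (rule someI[of "\<lambda>x. x \<in> cls f"])
  then show ?thesis by (simp add: vq_class_def)
qed

lemma VQ_carrier: "carrier (VQ Q l) = cls ` FA l"
  and VQ_zero: "\<zero>\<^bsub>VQ Q l\<^esub> = cls fa_zero"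
  by (simp_all add: VQ_def)

lemma cls_in_VQ: "f \<in> FA l \<Longrightarrow> cls f \<in> carrier (VQ Q l)"
  by (simp add: VQ_carrier)

lemma VQ_add_cls: "f \<in> FA l \<Longrightarrow> g \<in> FA l \<Longrightarrow> cls f \<oplus>\<^bsub>VQ Q l\<^esub> cls g = cls (fa_add f g)"
  using vq_rep_cls[of f] vq_rep_cls[of g] by (simp add: VQ_def cls_eqI fa_add_FA NQ_equiv_add)

lemma VQ_smult_cls: "f \<in> FA l \<Longrightarrow> c \<odot>\<^bsub>VQ Q l\<^esub> cls f = cls (fa_smult c f)"
  using vq_rep_cls[of f] by (simp add: VQ_def cls_eqI fa_smult_FA NQ_equiv_smult)

lemma cls_mult_vq_rep: "f \<in> FA l \<Longrightarrow> x \<in> FA l \<Longrightarrow> cls (fa_mult x (vq_rep (cls f))) = cls (fa_mult x f)"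
  using vq_rep_cls[of f] by (intro cls_eqI fa_mult_FA NQ_equiv_mult) auto

lemma VQ_gen_op_cls:
  "a \<in> gens l \<Longrightarrow> f \<in> FA l \<Longrightarrow> gen_op (VQ_X Q l) (VQ_Y Q l) a (cls f) = cls (fa_mult (fa_word [a]) f)"
  by (cases a) (auto simp: gen_op_def VQ_X_def VQ_Y_def cls_mult_vq_rep fa_word_FA)

lemma VQ_X_cls: "i \<in> {1..l} \<Longrightarrow> f \<in> FA l \<Longrightarrow> VQ_X Q l i n (cls f) = cls (fa_mult (fa_word [(i, n, True)]) f)"
  and VQ_Y_cls: "i \<in> {1..l} \<Longrightarrow> f \<in> FA l \<Longrightarrow> VQ_Y Q l i n (cls f) = cls (fa_mult (fa_word [(i, n, False)]) f)"
  using VQ_gen_op_cls[of "(i, n, True)" f] VQ_gen_op_cls[of "(i, n, False)" f] by simp_all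

lemma abelian_group_VQ: "abelian_group (VQ Q l)"
proof (rule abelian_groupI)
  fix x y z assume "x \<in> carrier (VQ Q l)" "y \<in> carrier (VQ Q l)" "z \<in> carrier (VQ Q l)"
  then obtain f g h where fgh: "f \<in> FA l" "g \<in> FA l" "h \<in> FA l" "x = cls f" "y = cls g" "z = cls h"
    by (auto simp: VQ_carrier)
  have "fa_add (fa_add f g) h = fa_add f (fa_add g h)" "fa_add f g = fa_add g f" by (auto simp: fa_defs)
  then show "x \<oplus>\<^bsub>VQ Q l\<^esub> y \<oplus>\<^bsub>VQ Q l\<^esub> z = x \<oplus>\<^bsub>VQ Q l\<^esub> (y \<oplus>\<^bsub>VQ Q l\<^esub> z)"
    and "x \<oplus>\<^bsub>VQ Q l\<^esub> y = y \<oplus>\<^bsub>VQ Q l\<^esub> x"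
    using fgh by (simp_all add: VQ_add_cls fa_add_FA)
next
  fix x y assume "x \<in> carrier (VQ Q l)" "y \<in> carrier (VQ Q l)"
  then show "x \<oplus>\<^bsub>VQ Q l\<^esub> y \<in> carrier (VQ Q l)"
    by (auto simp: VQ_carrier VQ_add_cls fa_add_FA)
next
  show "\<zero>\<^bsub>VQ Q l\<^esub> \<in> carrier (VQ Q l)" by (simp add: VQ_zero VQ_carrier)
next
  fix x assume "x \<in> carrier (VQ Q l)"
  then obtain f where f: "f \<in> FA l" "x = cls f" by (auto simp: VQ_carrier)
  have "fa_add fa_zero f = f" "fa_add (fa_smult (-1) f) f = fa_zero" by (auto simp: fa_defs)
  then show "\<zero>\<^bsub>VQ Q l\<^esub> \<oplus>\<^bsub>VQ Q l\<^esub> x = x" and "\<exists>y\<in>carrier (VQ Q l). y \<oplus>\<^bsub>VQ Q l\<^esub> x = \<zero>\<^bsub>VQ Q l\<^esub>"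
    using f by (simp add: VQ_zero VQ_add_cls,
      intro bexI[of _ "cls (fa_smult (-1) f)"]) (simp_all add: VQ_zero VQ_add_cls cls_in_VQ fa_smult_FA)
qed

lemma module_VQ: "module CC (VQ Q l)"
proof (rule moduleI[OF cring_CC abelian_group_VQ])
  fix a b x y assume "x \<in> carrier (VQ Q l)" "y \<in> carrier (VQ Q l)"
  then obtain f g where fg: "f \<in> FA l" "x = cls f" "g \<in> FA l" "y = cls g" by (auto simp: VQ_carrier)
  have "fa_smult (a + b) f = fa_add (fa_smult a f) (fa_smult b f)"
    "fa_smult (a * b) f = fa_smult a (fa_smult b f)" "fa_smult 1 f = f"
    "fa_smult a (fa_add f g) = fa_add (fa_smult a f) (fa_smult a g)"
    by (auto simp: fa_defs algebra_simps)
  then show "a \<odot>\<^bsub>VQ Q l\<^esub> x \<in> carrier (VQ Q l)"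
    and "(a \<oplus>\<^bsub>CC\<^esub> b) \<odot>\<^bsub>VQ Q l\<^esub> x = a \<odot>\<^bsub>VQ Q l\<^esub> x \<oplus>\<^bsub>VQ Q l\<^esub> b \<odot>\<^bsub>VQ Q l\<^esub> x"
    and "(a \<otimes>\<^bsub>CC\<^esub> b) \<odot>\<^bsub>VQ Q l\<^esub> x = a \<odot>\<^bsub>VQ Q l\<^esub> (b \<odot>\<^bsub>VQ Q l\<^esub> x)"
    and "\<one>\<^bsub>CC\<^esub> \<odot>\<^bsub>VQ Q l\<^esub> x = x"
    and "a \<odot>\<^bsub>VQ Q l\<^esub> (x \<oplus>\<^bsub>VQ Q l\<^esub> y) = a \<odot>\<^bsub>VQ Q l\<^esub> x \<oplus>\<^bsub>VQ Q l\<^esub> a \<odot>\<^bsub>VQ Q l\<^esub> y"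
    using fg by (simp_all add: VQ_smult_cls VQ_add_cls fa_smult_FA fa_add_FA cls_in_VQ)
qed

lemma lin_op_VQ_gen_op: "a \<in> gens l \<Longrightarrow> lin_op (VQ Q l) (gen_op (VQ_X Q l) (VQ_Y Q l) a)"
  unfolding lin_op_def
proof (intro conjI ballI allI)
  fix c u v assume a: "a \<in> gens l" and "u \<in> carrier (VQ Q l)" "v \<in> carrier (VQ Q l)"
  then obtain f g where fg: "f \<in> FA l" "u = cls f" "g \<in> FA l" "v = cls g" by (auto simp: VQ_carrier)
  have FA: "fa_word [a] \<in> FA l" using a by (simp add: fa_word_FA)
  show "gen_op (VQ_X Q l) (VQ_Y Q l) a v \<in> carrier (VQ Q l)"
    using fg a FA by (simp add: VQ_gen_op_cls cls_in_VQ fa_mult_FA)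
  show "gen_op (VQ_X Q l) (VQ_Y Q l) a (u \<oplus>\<^bsub>VQ Q l\<^esub> v)
      = gen_op (VQ_X Q l) (VQ_Y Q l) a u \<oplus>\<^bsub>VQ Q l\<^esub> gen_op (VQ_X Q l) (VQ_Y Q l) a v"
    using fg a FA by (simp add: VQ_gen_op_cls VQ_add_cls fa_add_FA fa_mult_FA fa_mult_add_right)
  show "gen_op (VQ_X Q l) (VQ_Y Q l) a (c \<odot>\<^bsub>VQ Q l\<^esub> v) = c \<odot>\<^bsub>VQ Q l\<^esub> gen_op (VQ_X Q l) (VQ_Y Q l) a v"
    using fg a FA by (simp add: VQ_gen_op_cls VQ_smult_cls fa_smult_FA fa_mult_FA fa_mult_smult_right)
qed

lemma cls_eq_by_rel:
  assumes "r \<in> rels Q l" "f \<in> FA l" "x \<in> FA l" "y \<in> FA l" "fa_add x (fa_smult (-1) y) = fa_mult r f"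
  shows "cls x = cls y"
  using NQ.rel[OF assms(1) fa_word_FA[of "[]" l] assms(2)] assms by (intro cls_eqI) auto

lemma VQ_gen_op_gen_op_cls:
  "a \<in> gens l \<Longrightarrow> d \<in> gens l \<Longrightarrow> f \<in> FA l \<Longrightarrow>
    gen_op (VQ_X Q l) (VQ_Y Q l) a (gen_op (VQ_X Q l) (VQ_Y Q l) d (cls f)) = cls (fa_mult (fa_word [a, d]) f)"
  using fa_mult_word_append[of f l "[a]" "[d]"] by (simp add: VQ_gen_op_cls fa_mult_word_FA)

lemma VQ_same_comm:
  assumes ij: "i \<in> {1..l}" "j \<in> {1..l}" and v: "v \<in> carrier (VQ Q l)"
  shows "gen_op (VQ_X Q l) (VQ_Y Q l) (i, m, b) (gen_op (VQ_X Q l) (VQ_Y Q l) (j, n, b) v)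
    = Q i j \<odot>\<^bsub>VQ Q l\<^esub> gen_op (VQ_X Q l) (VQ_Y Q l) (j, n, b) (gen_op (VQ_X Q l) (VQ_Y Q l) (i, m, b) v)"
proof -
  obtain f where f: "f \<in> FA l" "v = cls f" using v by (auto simp: VQ_carrier)
  let ?r = "fa_add (fa_word [(i, m, b), (j, n, b)]) (fa_smult (- Q i j) (fa_word [(j, n, b), (i, m, b)]))"
  have "?r \<in> rels Q l" unfolding rels_def using ij by blast
  then have "cls (fa_mult (fa_word [(i, m, b), (j, n, b)]) f)
      = cls (fa_smult (Q i j) (fa_mult (fa_word [(j, n, b), (i, m, b)]) f))"
    by (rule cls_eq_by_rel[OF _ f(1)])
      (use f ij in \<open>simp_all add: fa_smult_FA fa_mult_word_FA fa_mult_add_left fa_mult_smult_left fa_smult_smult\<close>)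
  then show ?thesis
    using f ij by (simp add: VQ_gen_op_gen_op_cls VQ_smult_cls fa_mult_word_FA)
qed

lemma VQ_X_Y_comm:
  assumes ij: "i \<in> {1..l}" "j \<in> {1..l}" and v: "v \<in> carrier (VQ Q l)"
  shows "VQ_X Q l i m (VQ_Y Q l j n v)
    = Q j i \<odot>\<^bsub>VQ Q l\<^esub> VQ_Y Q l j n (VQ_X Q l i m v) \<oplus>\<^bsub>VQ Q l\<^esub> (if i = j \<and> m + n + 1 = 0 then v else \<zero>\<^bsub>VQ Q l\<^esub>)"
proof -
  obtain f where f: "f \<in> FA l" "v = cls f" using v by (auto simp: VQ_carrier)
  let ?c = "i = j \<and> m + n + 1 = 0"
  let ?r = "fa_add (fa_add (fa_word [(i, m, True), (j, n, False)])
                     (fa_smult (- Q j i) (fa_word [(j, n, False), (i, m, True)])))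
             (if ?c then fa_smult (-1) (fa_word []) else fa_zero)"
  let ?a = "fa_mult (fa_word [(i, m, True), (j, n, False)]) f"
  let ?b = "fa_mult (fa_word [(j, n, False), (i, m, True)]) f"
  have FA: "?a \<in> FA l" "?b \<in> FA l" using f ij by (simp_all add: fa_mult_word_FA)
  have "?r \<in> rels Q l" unfolding rels_def using ij by blast
  moreover have "fa_mult ?r f = fa_add (fa_add ?a (fa_smult (- Q j i) ?b)) (if ?c then fa_smult (-1) f else fa_zero)"
  proof (cases ?c)
    case True
    then show ?thesis unfolding if_P[OF True] by (simp add: fa_mult_add_left fa_mult_smult_left)
  next
    case False
    then show ?thesis unfolding if_not_P[OF False] by (simp add: fa_mult_add_left fa_mult_smult_left)
  qed
  then have "fa_add ?a (fa_smult (-1) (fa_add (fa_smult (Q j i) ?b) (if ?c then f else fa_zero))) = fa_mult ?r f"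
    by (cases ?c) (auto simp: fa_defs)
  ultimately have "cls ?a = cls (fa_add (fa_smult (Q j i) ?b) (if ?c then f else fa_zero))"
    using f FA by (intro cls_eq_by_rel) (auto simp: fa_add_FA fa_smult_FA)
  moreover have "(if ?c then v else \<zero>\<^bsub>VQ Q l\<^esub>) = cls (if ?c then f else fa_zero)"
    using f by (simp add: VQ_zero)
  ultimately show ?thesis
    using f ij FA VQ_gen_op_gen_op_cls[of "(i, m, True)" "(j, n, False)" f]
      VQ_gen_op_gen_op_cls[of "(j, n, False)" "(i, m, True)" f]
    by (simp add: VQ_smult_cls VQ_add_cls fa_smult_FA)
qed

lemma AQ_module_VQ: "AQ_module Q l (VQ Q l) (VQ_X Q l) (VQ_Y Q l)"
  unfolding AQ_module_def
proof (intro conjI ballI allI module_VQ)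
  fix i n assume "i \<in> {1..l}"
  then show "lin_op (VQ Q l) (VQ_X Q l i n)" "lin_op (VQ Q l) (VQ_Y Q l i n)"
    using lin_op_VQ_gen_op[of "(i, n, True)"] lin_op_VQ_gen_op[of "(i, n, False)"] by simp_all
next
  fix i j m n v assume "i \<in> {1..l}" "j \<in> {1..l}" "v \<in> carrier (VQ Q l)"
  then show "VQ_X Q l i m (VQ_X Q l j n v) = Q i j \<odot>\<^bsub>VQ Q l\<^esub> VQ_X Q l j n (VQ_X Q l i m v)"
    and "VQ_Y Q l i m (VQ_Y Q l j n v) = Q i j \<odot>\<^bsub>VQ Q l\<^esub> VQ_Y Q l j n (VQ_Y Q l i m v)"
    and "VQ_X Q l i m (VQ_Y Q l j n v) = Q j i \<odot>\<^bsub>VQ Q l\<^esub> VQ_Y Q l j n (VQ_X Q l i m v) \<oplus>\<^bsub>VQ Q l\<^esub>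
      (if i = j \<and> m + n + 1 = 0 then v else \<zero>\<^bsub>VQ Q l\<^esub>)"
    using VQ_same_comm[of i j v m True n] VQ_same_comm[of i j v m False n] VQ_X_Y_comm by simp_all
qed

lemma VQ_vac_in_VQ: "VQ_vac Q l \<in> carrier (VQ Q l)"
  by (simp add: VQ_vac_def cls_in_VQ fa_word_FA)

lemma is_vacuum_VQ_vac: "is_vacuum l (VQ Q l) (VQ_X Q l) (VQ_Y Q l) (VQ_vac Q l)"
  unfolding is_vacuum_def
proof (intro conjI ballI allI impI VQ_vac_in_VQ)
  fix i :: nat and m :: int assume i: "i \<in> {1..l}" and m: "m \<ge> 0"
  have "cls (fa_word [(i, m, b)]) = cls fa_zero" for b
  proof (rule cls_eqI)
    have "fa_mult (fa_word []) (fa_word [(i, m, b)]) \<in> NQ Q l"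
      by (rule NQ.ann[OF i m]) (simp add: fa_word_FA)
    moreover have "fa_add (fa_word [(i, m, b)]) (fa_smult (-1) fa_zero) = fa_word [(i, m, b)]"
      by (auto simp: fa_defs)
    ultimately show "NQ_equiv (fa_word [(i, m, b)]) fa_zero" by simp
  qed (simp_all add: fa_word_single_FA[OF i])
  moreover have "fa_mult (fa_word [(i, m, b)]) (fa_word []) = fa_word [(i, m, b)]" for b
    using fa_mult_word_word[of "[(i, m, b)]" "[]"] by simp
  ultimately show "VQ_X Q l i m (VQ_vac Q l) = \<zero>\<^bsub>VQ Q l\<^esub>" "VQ_Y Q l i m (VQ_vac Q l) = \<zero>\<^bsub>VQ Q l\<^esub>"
    using i by (simp_all add: VQ_vac_def VQ_X_cls VQ_Y_cls fa_word_FA VQ_zero)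
qed

lemma generates_VQ_vac: "generates l (VQ Q l) (VQ_X Q l) (VQ_Y Q l) (VQ_vac Q l)"
  unfolding generates_def
proof (intro allI impI subsetI)
  interpret module CC "VQ Q l" by (rule module_VQ)
  fix N A assume N: "AQ_submodule l N (VQ Q l) (VQ_X Q l) (VQ_Y Q l) \<and> VQ_vac Q l \<in> N"
    and A: "A \<in> carrier (VQ Q l)"
  have N_sub: "submodule N CC (VQ Q l)" using N by (simp add: AQ_submodule_def)
  have words: "cls (fa_word u) \<in> N" if "set u \<subseteq> gens l" for u
    using that
  proof (induction u)
    case (Cons a u)
    have "gen_op (VQ_X Q l) (VQ_Y Q l) a (cls (fa_word u)) \<in> N"
      using N Cons by (cases a) (auto simp: AQ_submodule_def gen_op_def)
    then show ?case
      using Cons.prems fa_mult_word_word[of "[a]" u] by (simp add: VQ_gen_op_cls fa_word_FA)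
  qed (use N in \<open>simp add: VQ_vac_def\<close>)
  obtain f where f: "f \<in> FA l" "A = cls f" using A by (auto simp: VQ_carrier)
  have "cls f \<in> N" using f(1)
  proof (induction f rule: FA_induct)
    case zero
    then show ?case using submodule_zero_closed[OF N_sub] by (simp add: VQ_zero)
  next
    case (step c u g)
    have "c \<odot>\<^bsub>VQ Q l\<^esub> cls (fa_word u) \<oplus>\<^bsub>VQ Q l\<^esub> cls g \<in> N"
      using submoduleE(4)[OF N_sub] submoduleE(5)[OF N_sub] words[OF step(1)] step by simp
    then show ?case using step by (simp add: VQ_smult_cls VQ_add_cls fa_word_FA fa_smult_FA)
  qed
  then show "A \<in> N" using f by simp
qed

lemma vacuum_module_VQ: "vacuum_module Q l (VQ Q l) (VQ_X Q l) (VQ_Y Q l) (VQ_vac Q l)"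
  unfolding vacuum_module_def using AQ_module_VQ is_vacuum_VQ_vac generates_VQ_vac by blast

end

section \<open>Homomorphisms of \<open>A\<^sub>Q\<close>-modules\<close>

definition AQ_hom ::
  "nat \<Rightarrow> ('a \<Rightarrow> 'b)
   \<Rightarrow> (complex, 'a) module \<Rightarrow> (nat \<Rightarrow> int \<Rightarrow> 'a \<Rightarrow> 'a) \<Rightarrow> (nat \<Rightarrow> int \<Rightarrow> 'a \<Rightarrow> 'a)
   \<Rightarrow> (complex, 'b) module \<Rightarrow> (nat \<Rightarrow> int \<Rightarrow> 'b \<Rightarrow> 'b) \<Rightarrow> (nat \<Rightarrow> int \<Rightarrow> 'b \<Rightarrow> 'b) \<Rightarrow> bool" where
  "AQ_hom l \<phi> M X Y M' X' Y' \<longleftrightarrow> (\<forall>v\<in>carrier M. \<phi> v \<in> carrier M')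
     \<and> (\<forall>u\<in>carrier M. \<forall>v\<in>carrier M. \<phi> (u \<oplus>\<^bsub>M\<^esub> v) = \<phi> u \<oplus>\<^bsub>M'\<^esub> \<phi> v)
     \<and> (\<forall>c. \<forall>v\<in>carrier M. \<phi> (c \<odot>\<^bsub>M\<^esub> v) = c \<odot>\<^bsub>M'\<^esub> \<phi> v)
     \<and> (\<forall>i\<in>{1..l}. \<forall>n. \<forall>v\<in>carrier M. \<phi> (X i n v) = X' i n (\<phi> v) \<and> \<phi> (Y i n v) = Y' i n (\<phi> v))"

lemma AQ_iso_iff_bij_hom:
  "AQ_iso l \<phi> M X Y M' X' Y' \<longleftrightarrow> bij_betw \<phi> (carrier M) (carrier M') \<and> AQ_hom l \<phi> M X Y M' X' Y'"
  unfolding AQ_iso_def AQ_hom_def bij_betw_def by blast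

context
  fixes Q :: "nat \<Rightarrow> nat \<Rightarrow> complex" and l :: nat
    and M :: "(complex, 'a) module" and X Y :: "nat \<Rightarrow> int \<Rightarrow> 'a \<Rightarrow> 'a"
    and M' :: "(complex, 'b) module" and X' Y' :: "nat \<Rightarrow> int \<Rightarrow> 'b \<Rightarrow> 'b" and \<phi> :: "'a \<Rightarrow> 'b"
  assumes M: "AQ_module Q l M X Y" and M': "AQ_module Q l M' X' Y'" and hom: "AQ_hom l \<phi> M X Y M' X' Y'"
begin

interpretation M: aq_rep Q l M X Y by (rule aq_rep.intro[OF M])
interpretation M': aq_rep Q l M' X' Y' by (rule aq_rep.intro[OF M'])

lemma AQ_hom_closed: "v \<in> carrier M \<Longrightarrow> \<phi> v \<in> carrier M'"
  and AQ_hom_add: "u \<in> carrier M \<Longrightarrow> v \<in> carrier M \<Longrightarrow> \<phi> (u \<oplus>\<^bsub>M\<^esub> v) = \<phi> u \<oplus>\<^bsub>M'\<^esub> \<phi> v"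
  and AQ_hom_smult: "v \<in> carrier M \<Longrightarrow> \<phi> (c \<odot>\<^bsub>M\<^esub> v) = c \<odot>\<^bsub>M'\<^esub> \<phi> v"
  and AQ_hom_gen_op: "a \<in> gens l \<Longrightarrow> v \<in> carrier M \<Longrightarrow> \<phi> (gen_op X Y a v) = gen_op X' Y' a (\<phi> v)"
  using hom by (auto simp: AQ_hom_def gen_op_def split: prod.split)

lemma AQ_hom_zero: "\<phi> \<zero>\<^bsub>M\<^esub> = \<zero>\<^bsub>M'\<^esub>"
  using AQ_hom_smult[of "\<zero>\<^bsub>M\<^esub>" 0] AQ_hom_closed[of "\<zero>\<^bsub>M\<^esub>"] by simp

lemma AQ_hom_kernel_submodule: "AQ_submodule l {v \<in> carrier M. \<phi> v = \<zero>\<^bsub>M'\<^esub>} M X Y"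
  unfolding AQ_submodule_def
proof (intro conjI ballI allI M.submoduleI)
  fix i n v assume "i \<in> {1..l}" "v \<in> {v \<in> carrier M. \<phi> v = \<zero>\<^bsub>M'\<^esub>}"
  then show "X i n v \<in> {v \<in> carrier M. \<phi> v = \<zero>\<^bsub>M'\<^esub>}" "Y i n v \<in> {v \<in> carrier M. \<phi> v = \<zero>\<^bsub>M'\<^esub>}"
    using AQ_hom_gen_op[of "(i, n, True)" v] AQ_hom_gen_op[of "(i, n, False)" v]
      M'.gen_op_zero[of "(i, n, True)"] M'.gen_op_zero[of "(i, n, False)"] by simp_all
qed (auto simp: AQ_hom_zero AQ_hom_add AQ_hom_smult M.csmult_minus_one)

lemma AQ_hom_image_submodule: "AQ_submodule l (\<phi> ` carrier M) M' X' Y'"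
  unfolding AQ_submodule_def
proof (intro conjI ballI allI M'.submoduleI)
  show "\<zero>\<^bsub>M'\<^esub> \<in> \<phi> ` carrier M" using AQ_hom_zero by force
  fix c x y assume "x \<in> \<phi> ` carrier M" "y \<in> \<phi> ` carrier M"
  then obtain u v where uv: "u \<in> carrier M" "v \<in> carrier M" "x = \<phi> u" "y = \<phi> v" by blast
  show "x \<oplus>\<^bsub>M'\<^esub> y \<in> \<phi> ` carrier M"
    using uv by (intro image_eqI[of _ _ "u \<oplus>\<^bsub>M\<^esub> v"]) (simp_all add: AQ_hom_add)
  show "c \<odot>\<^bsub>M'\<^esub> x \<in> \<phi> ` carrier M"
    using uv by (intro image_eqI[of _ _ "c \<odot>\<^bsub>M\<^esub> u"]) (simp_all add: AQ_hom_smult)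
  show "\<ominus>\<^bsub>M'\<^esub> x \<in> \<phi> ` carrier M"
    using uv AQ_hom_closed[of u] M'.csmult_minus_one
    by (intro image_eqI[of _ _ "(-1) \<odot>\<^bsub>M\<^esub> u"]) (simp_all add: AQ_hom_smult)
next
  fix i n x assume i: "i \<in> {1..l}" and "x \<in> \<phi> ` carrier M"
  then obtain u where u: "u \<in> carrier M" "x = \<phi> u" by blast
  show "X' i n x \<in> \<phi> ` carrier M"
    using u i AQ_hom_gen_op[of "(i, n, True)" u] by (intro image_eqI[of _ _ "X i n u"]) simp_all
  show "Y' i n x \<in> \<phi> ` carrier M"
    using u i AQ_hom_gen_op[of "(i, n, False)" u] by (intro image_eqI[of _ _ "Y i n u"]) simp_all
qed (use AQ_hom_closed in auto)

lemma AQ_hom_inj_on: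
  assumes irreducible: "AQ_irreducible Q l M X Y" and v: "v \<in> carrier M" "\<phi> v \<noteq> \<zero>\<^bsub>M'\<^esub>"
  shows "inj_on \<phi> (carrier M)"
proof (rule inj_onI)
  fix x y assume x: "x \<in> carrier M" and y: "y \<in> carrier M" and eq: "\<phi> x = \<phi> y"
  let ?K = "{v \<in> carrier M. \<phi> v = \<zero>\<^bsub>M'\<^esub>}"
  have "?K = {\<zero>\<^bsub>M\<^esub>} \<or> ?K = carrier M"
    using irreducible AQ_hom_kernel_submodule unfolding AQ_irreducible_def by (elim conjE allE impE)
  moreover have "?K \<noteq> carrier M" using v by blast
  ultimately have K: "?K = {\<zero>\<^bsub>M\<^esub>}" by blast
  have "\<phi> (x \<oplus>\<^bsub>M\<^esub> \<ominus>\<^bsub>M\<^esub> y) = \<phi> y \<oplus>\<^bsub>M'\<^esub> (- 1) \<odot>\<^bsub>M'\<^esub> \<phi> y"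
    using x y eq by (simp add: M.csmult_minus_one AQ_hom_add AQ_hom_smult)
  also have "\<dots> = \<zero>\<^bsub>M'\<^esub>" using M'.csmult_cancel[OF AQ_hom_closed[OF y], of 1] AQ_hom_closed[OF y] by simp
  finally have "x \<oplus>\<^bsub>M\<^esub> \<ominus>\<^bsub>M\<^esub> y \<in> ?K" using x y by simp
  then show "x = y" using K x y M.add_minus_eq_zero_imp_eq by blast
qed

lemma AQ_hom_surj:
  assumes "v \<in> carrier M" "generates l M' X' Y' (\<phi> v)"
  shows "\<phi> ` carrier M = carrier M'"
proof
  show "carrier M' \<subseteq> \<phi> ` carrier M"
    using assms(2)[unfolded generates_def, rule_format, OF conjI[OF AQ_hom_image_submodule imageI[OF assms(1)]]] .
qed (use AQ_hom_closed in auto)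

end

definition vq_lift :: "(complex, 'm) module \<Rightarrow> (nat \<Rightarrow> int \<Rightarrow> 'm \<Rightarrow> 'm) \<Rightarrow> (nat \<Rightarrow> int \<Rightarrow> 'm \<Rightarrow> 'm) \<Rightarrow> 'm
    \<Rightarrow> fa set \<Rightarrow> 'm" where
  "vq_lift M X Y w A = fa_act M X Y (vq_rep A) w"

context aq_rep
begin

context
  fixes w assumes w: "is_vacuum l M X Y w"
begin

lemma vq_lift_cls: "f \<in> FA l \<Longrightarrow> vq_lift M X Y w (cls Q l f) = fa_act M X Y f w"
proof -
  assume f: "f \<in> FA l"
  have w_carrier: "w \<in> carrier M" using w by (simp add: is_vacuum_def)
  obtain g where g: "g = vq_rep (cls Q l f)" "g \<in> FA l" "fa_add g (fa_smult (-1) f) \<in> NQ Q l"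
    using vq_rep_cls[OF f] by blast
  have "fa_act M X Y (fa_add g (fa_smult (-1) f)) w = fa_act M X Y g w \<oplus>\<^bsub>M\<^esub> (-1) \<odot>\<^bsub>M\<^esub> fa_act M X Y f w"
    using fa_act_add[OF g(2) fa_smult_FA[OF f] w_carrier] fa_act_smult[OF f w_carrier] by simp
  then have "fa_act M X Y g w \<oplus>\<^bsub>M\<^esub> \<ominus>\<^bsub>M\<^esub> fa_act M X Y f w = \<zero>\<^bsub>M\<^esub>"
    using fa_act_NQ_vacuum[OF g(3) w] csmult_minus_one[OF fa_act_closed[OF f w_carrier]] by simp
  then have "fa_act M X Y g w = fa_act M X Y f w"
    using add_minus_eq_zero_imp_eq f g(2) w_carrier by simp
  then show ?thesis using g(1) by (simp add: vq_lift_def)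
qed

lemma AQ_hom_vq_lift: "AQ_hom l (vq_lift M X Y w) (VQ Q l) (VQ_X Q l) (VQ_Y Q l) M X Y"
proof -
  have w_carrier: "w \<in> carrier M" using w by (simp add: is_vacuum_def)
  have gen: "vq_lift M X Y w (gen_op (VQ_X Q l) (VQ_Y Q l) a A) = gen_op X Y a (vq_lift M X Y w A)"
    if "a \<in> gens l" "A \<in> carrier (VQ Q l)" for a A
    using that w_carrier fa_act_mult_word[of _ "[a]" w]
    by (auto simp: VQ_carrier VQ_gen_op_cls vq_lift_cls fa_mult_word_FA)
  show ?thesis
    unfolding AQ_hom_def
  proof (intro conjI ballI allI)
    fix c u v assume "u \<in> carrier (VQ Q l)" "v \<in> carrier (VQ Q l)"
    then obtain f g where fg: "f \<in> FA l" "u = cls Q l f" "g \<in> FA l" "v = cls Q l g"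
      by (auto simp: VQ_carrier)
    then show "vq_lift M X Y w v \<in> carrier M"
      and "vq_lift M X Y w (u \<oplus>\<^bsub>VQ Q l\<^esub> v) = vq_lift M X Y w u \<oplus>\<^bsub>M\<^esub> vq_lift M X Y w v"
      and "vq_lift M X Y w (c \<odot>\<^bsub>VQ Q l\<^esub> v) = c \<odot>\<^bsub>M\<^esub> vq_lift M X Y w v"
      using w_carrier
      by (simp_all add: vq_lift_cls VQ_add_cls VQ_smult_cls fa_add_FA fa_smult_FA fa_act_add fa_act_smult)
  next
    fix i n v assume "i \<in> {1..l}" "v \<in> carrier (VQ Q l)"
    then show "vq_lift M X Y w (VQ_X Q l i n v) = X i n (vq_lift M X Y w v)"
      and "vq_lift M X Y w (VQ_Y Q l i n v) = Y i n (vq_lift M X Y w v)"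
      using gen[of "(i, n, True)" v] gen[of "(i, n, False)" v] by simp_all
  qed
qed

lemma vq_lift_VQ_vac: "vq_lift M X Y w (VQ_vac Q l) = w"
  using w by (simp add: VQ_vac_def vq_lift_cls fa_word_FA fa_act_word is_vacuum_def)

end

end

context vacuum_rep
begin

lemma vacuum_nonzero: "carrier M \<noteq> {\<zero>\<^bsub>M\<^esub>} \<Longrightarrow> w \<noteq> \<zero>\<^bsub>M\<^esub>"
proof
  assume "carrier M \<noteq> {\<zero>\<^bsub>M\<^esub>}" and "w = \<zero>\<^bsub>M\<^esub>"
  moreover have "AQ_submodule l {\<zero>\<^bsub>M\<^esub>} M X Y"
    unfolding AQ_submodule_def using gen_op_zero[of "(i, n, True)" for i n] gen_op_zero[of "(i, n, False)" for i n]
    by (auto intro: submoduleI)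
  ultimately show False using vacuum_generates by blast
qed

theorem VQ_iso:
  assumes "carrier M \<noteq> {\<zero>\<^bsub>M\<^esub>}" and "AQ_irreducible Q l (VQ Q l) (VQ_X Q l) (VQ_Y Q l)"
  shows "AQ_iso l (vq_lift M X Y w) (VQ Q l) (VQ_X Q l) (VQ_Y Q l) M X Y"
proof -
  have w: "is_vacuum l M X Y w" using vacuum_module by (simp add: vacuum_module_def)
  note hom = AQ_module_VQ aq AQ_hom_vq_lift[OF w]
  have "inj_on (vq_lift M X Y w) (carrier (VQ Q l))"
    using AQ_hom_inj_on[OF hom assms(2) VQ_vac_in_VQ] vq_lift_VQ_vac[OF w] vacuum_nonzero[OF assms(1)] by simp
  moreover have "vq_lift M X Y w ` carrier (VQ Q l) = carrier M"
    using AQ_hom_surj[OF hom VQ_vac_in_VQ] vq_lift_VQ_vac[OF w] vacuum_module by (simp add: vacuum_module_def)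
  ultimately show ?thesis using hom(3) by (simp add: AQ_iso_iff_bij_hom bij_betw_def)
qed

end

section \<open>A Fock representation\<close>

text \<open>Vectors are functions of finitely supported occupation numbers \<open>n\<close>; a creation
  generator \<open>a\<close> adds a particle in mode \<open>a\<close>, an annihilator removes one from its dual mode.
  Modes \<open>g\<close> with \<open>q\<^sub>i\<^sub>i = -1\<close> (\<open>i = fst g\<close>) are fermionic: their occupation is at most one.
  \<open>order_factor Q a n\<close> is the product of the \<open>q\<close>-factors picked up when \<open>a\<close> is moved past the
  smaller generators occupied in \<open>n\<close>.\<close>

type_synonym occupation = "gen \<Rightarrow> nat"

definition occ_inc :: "gen \<Rightarrow> occupation \<Rightarrow> occupation" where
  "occ_inc a n = n(a := Suc (n a))"

definition occ_dec :: "gen \<Rightarrow> occupation \<Rightarrow> occupation" where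
  "occ_dec a n = n(a := n a - 1)"

definition admissible_occ :: "(nat \<Rightarrow> nat \<Rightarrow> complex) \<Rightarrow> nat \<Rightarrow> occupation \<Rightarrow> bool" where
  "admissible_occ Q l n \<longleftrightarrow> finite {g. n g \<noteq> 0} \<and> (\<forall>g. n g \<noteq> 0 \<longrightarrow> g \<in> gens l)
     \<and> (\<forall>g. Q (fst g) (fst g) \<noteq> 1 \<longrightarrow> n g \<le> 1)"

definition order_factor :: "(nat \<Rightarrow> nat \<Rightarrow> complex) \<Rightarrow> gen \<Rightarrow> occupation \<Rightarrow> complex" where
  "order_factor Q a n = (\<Prod>g\<in>{g. n g \<noteq> 0}. if g < a then comm_coeff Q a g ^ n g else 1)"

definition qnum :: "(nat \<Rightarrow> nat \<Rightarrow> complex) \<Rightarrow> gen \<Rightarrow> nat \<Rightarrow> complex" where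
  "qnum Q a k = number_coeff Q a * (\<Sum>j<k. Q (fst a) (fst a) ^ j)"

lemma qnum_0[simp]: "qnum Q a 0 = 0"
  by (simp add: qnum_def)

lemma qnum_Suc: "qnum Q a (Suc k) = number_coeff Q a + Q (fst a) (fst a) * qnum Q a k"
  unfolding qnum_def by (subst sum.lessThan_Suc_shift) (simp add: sum_distrib_left algebra_simps)

lemma occ_inc_same[simp]: "occ_inc a n a = Suc (n a)"
  and occ_inc_other[simp]: "b \<noteq> a \<Longrightarrow> occ_inc a n b = n b"
  and occ_dec_same[simp]: "occ_dec a n a = n a - 1"
  and occ_dec_other[simp]: "b \<noteq> a \<Longrightarrow> occ_dec a n b = n b"
  by (simp_all add: occ_inc_def occ_dec_def)

lemma occ_dec_occ_inc[simp]: "occ_dec a (occ_inc a n) = n"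
  and occ_inc_occ_dec: "0 < n a \<Longrightarrow> occ_inc a (occ_dec a n) = n"
  and occ_dec_occ_inc_comm: "a \<noteq> d \<Longrightarrow> occ_dec d (occ_inc a n) = occ_inc a (occ_dec d n)"
  and occ_dec_commute: "a \<noteq> d \<Longrightarrow> occ_dec d (occ_dec a n) = occ_dec a (occ_dec d n)"
  and occ_inc_commute: "a \<noteq> d \<Longrightarrow> occ_inc d (occ_inc a n) = occ_inc a (occ_inc d n)"
  by (auto simp: occ_dec_def occ_inc_def fun_eq_iff)

lemma finite_occ_inc: "finite {g. n g \<noteq> 0} \<Longrightarrow> finite {g. occ_inc a n g \<noteq> 0}"
  by (rule finite_subset[of _ "insert a {g. n g \<noteq> 0}"]) (auto simp: occ_inc_def)

lemma finite_occ_dec: "finite {g. n g \<noteq> 0} \<Longrightarrow> finite {g. occ_dec a n g \<noteq> 0}"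
  by (rule finite_subset[of _ "{g. n g \<noteq> 0}"]) (auto simp: occ_dec_def)

lemma admissible_occ_mono:
  assumes n: "admissible_occ Q l n" and le: "\<And>g. m g \<le> n g"
  shows "admissible_occ Q l m"
  unfolding admissible_occ_def
proof (intro conjI allI impI)
  have "{g. m g \<noteq> 0} \<subseteq> {g. n g \<noteq> 0}"
  proof (rule Collect_mono)
    show "m g \<noteq> 0 \<longrightarrow> n g \<noteq> 0" for g using le[of g] by linarith
  qed
  then show "finite {g. m g \<noteq> 0}" using n finite_subset by (auto simp: admissible_occ_def)
  fix g
  show "g \<in> gens l" if "m g \<noteq> 0"
  proof -
    have "n g \<noteq> 0" using le[of g] that by linarith
    then show ?thesis using n unfolding admissible_occ_def by blast
  qed
  show "m g \<le> 1" if "Q (fst g) (fst g) \<noteq> 1"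
    using n le[of g] that unfolding admissible_occ_def by (meson le_trans)
qed

lemma admissible_occ_dec: "admissible_occ Q l n \<Longrightarrow> admissible_occ Q l (occ_dec a n)"
  by (erule admissible_occ_mono) (simp add: occ_dec_def)

lemma admissible_occ_inc_imp: "admissible_occ Q l (occ_inc a n) \<Longrightarrow> admissible_occ Q l n"
  by (erule admissible_occ_mono) (simp add: occ_inc_def)

lemma admissible_occ_inc:
  assumes "a \<in> gens l"
  shows "admissible_occ Q l (occ_inc a n) \<longleftrightarrow> admissible_occ Q l n \<and> (Q (fst a) (fst a) \<noteq> 1 \<longrightarrow> n a = 0)"
proof
  assume inc: "admissible_occ Q l (occ_inc a n)"
  then have "Q (fst a) (fst a) \<noteq> 1 \<longrightarrow> Suc (n a) \<le> 1"
    unfolding admissible_occ_def using occ_inc_same[of a n] by metis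
  then show "admissible_occ Q l n \<and> (Q (fst a) (fst a) \<noteq> 1 \<longrightarrow> n a = 0)"
    using admissible_occ_inc_imp[OF inc] by simp
next
  assume "admissible_occ Q l n \<and> (Q (fst a) (fst a) \<noteq> 1 \<longrightarrow> n a = 0)"
  then show "admissible_occ Q l (occ_inc a n)"
    using assms finite_occ_inc[of n a] unfolding admissible_occ_def by (auto simp: occ_inc_def)
qed

lemma order_factor_superset:
  assumes "finite T" "{g. n g \<noteq> 0} \<subseteq> T"
  shows "order_factor Q a n = (\<Prod>g\<in>T. if g < a then comm_coeff Q a g ^ n g else 1)"
  unfolding order_factor_def by (rule prod.mono_neutral_left) (use assms in auto)

lemma order_factor_occ_inc:
  assumes fin: "finite {g. n g \<noteq> 0}" and "b \<noteq> a"
  shows "order_factor Q a (occ_inc b n) = order_factor Q a n * (if b < a then comm_coeff Q a b else 1)"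
proof -
  define T where "T = insert b {g. n g \<noteq> 0}"
  let ?t = "\<lambda>m g. if g < a then comm_coeff Q a g ^ m g else 1"
  have T: "finite T" "b \<in> T" "{g. n g \<noteq> 0} \<subseteq> T" "{g. occ_inc b n g \<noteq> 0} \<subseteq> T"
    using fin by (auto simp: T_def occ_inc_def)
  have rest: "(\<Prod>g\<in>T - {b}. ?t (occ_inc b n) g) = (\<Prod>g\<in>T - {b}. ?t n g)"
    by (rule prod.cong) auto
  have "order_factor Q a (occ_inc b n) = ?t (occ_inc b n) b * (\<Prod>g\<in>T - {b}. ?t (occ_inc b n) g)"
    using order_factor_superset[OF T(1,4), of Q a] prod.remove[OF T(1,2), of "?t (occ_inc b n)"] by simp
  also have "\<dots> = (?t n b * (\<Prod>g\<in>T - {b}. ?t n g)) * (if b < a then comm_coeff Q a b else 1)"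
    using rest by (simp add: ac_simps)
  also have "?t n b * (\<Prod>g\<in>T - {b}. ?t n g) = order_factor Q a n"
    using order_factor_superset[OF T(1,3)] prod.remove[OF T(1,2), of "?t n"] by simp
  finally show ?thesis .
qed

lemma order_factor_occ_inc_self:
  assumes fin: "finite {g. n g \<noteq> 0}"
  shows "order_factor Q a (occ_inc a n) = order_factor Q a n"
proof -
  define T where "T = insert a {g. n g \<noteq> 0}"
  have T: "finite T" "{g. n g \<noteq> 0} \<subseteq> T" "{g. occ_inc a n g \<noteq> 0} \<subseteq> T"
    using fin by (auto simp: T_def occ_inc_def)
  show ?thesis
    unfolding order_factor_superset[OF T(1,2)] order_factor_superset[OF T(1,3)] by (rule prod.cong) auto
qed

definition fock_op ::
  "(nat \<Rightarrow> nat \<Rightarrow> complex) \<Rightarrow> nat \<Rightarrow> gen \<Rightarrow> (occupation \<Rightarrow> complex) \<Rightarrow> occupation \<Rightarrow> complex" where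
  "fock_op Q l a f n =
    (if \<not> admissible_occ Q l n then 0
     else if creation a then (if 0 < n a then order_factor Q a (occ_dec a n) * f (occ_dec a n) else 0)
     else qnum Q (dual_gen a) (Suc (n (dual_gen a))) * inverse (order_factor Q (dual_gen a) n)
       * f (occ_inc (dual_gen a) n))"

definition fock_space :: "(nat \<Rightarrow> nat \<Rightarrow> complex) \<Rightarrow> nat \<Rightarrow> (occupation \<Rightarrow> complex) set" where
  "fock_space Q l = {f. \<forall>n. \<not> admissible_occ Q l n \<longrightarrow> f n = 0}"

context
  fixes Q :: "nat \<Rightarrow> nat \<Rightarrow> complex" and l :: nat
begin

abbreviation F :: "gen \<Rightarrow> (occupation \<Rightarrow> complex) \<Rightarrow> occupation \<Rightarrow> complex" where
  "F \<equiv> fock_op Q l"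

abbreviation adm :: "occupation \<Rightarrow> bool" where
  "adm \<equiv> admissible_occ Q l"

lemma admissible_occ_finite: "adm n \<Longrightarrow> finite {g. n g \<noteq> 0}"
  by (simp add: admissible_occ_def)

lemma fock_op_not_admissible: "\<not> adm n \<Longrightarrow> F a g n = 0"
  by (simp add: fock_op_def)

lemma fock_op_creation:
  "adm n \<Longrightarrow> creation a \<Longrightarrow> F a g n = (if 0 < n a then order_factor Q a (occ_dec a n) * g (occ_dec a n) else 0)"
  by (simp add: fock_op_def)

lemma fock_space_not_admissible: "f \<in> fock_space Q l \<Longrightarrow> \<not> adm n \<Longrightarrow> f n = 0"
  by (simp add: fock_space_def)

lemma fock_op_fock_space: "F a g \<in> fock_space Q l"
  by (simp add: fock_space_def fock_op_def)

lemma fock_op_annihilation: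
  assumes "f \<in> fock_space Q l" "\<not> creation a"
  shows "F a f n = qnum Q (dual_gen a) (Suc (n (dual_gen a))) * inverse (order_factor Q (dual_gen a) n)
    * f (occ_inc (dual_gen a) n)"
proof (cases "adm n")
  case False
  then have "\<not> adm (occ_inc (dual_gen a) n)" using admissible_occ_inc_imp by blast
  then show ?thesis using False assms by (simp add: fock_op_not_admissible fock_space_not_admissible)
qed (use assms in \<open>simp add: fock_op_def\<close>)

lemma fock_op_creation_occ_inc:
  assumes "\<alpha> \<in> gens l" "creation d" "d \<noteq> \<alpha>" "adm n" "f \<in> fock_space Q l"
  shows "F d f (occ_inc \<alpha> n)
    = (if 0 < n d then order_factor Q d (occ_dec d (occ_inc \<alpha> n)) * f (occ_dec d (occ_inc \<alpha> n)) else 0)"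
proof (cases "adm (occ_inc \<alpha> n)")
  case True
  then show ?thesis using assms by (simp add: fock_op_creation)
next
  case False
  then have "\<not> adm (occ_inc \<alpha> (occ_dec d n))"
    using admissible_occ_inc[OF assms(1)] assms(4) admissible_occ_dec[OF assms(4), of d] assms(3) by auto
  then have "f (occ_dec d (occ_inc \<alpha> n)) = 0"
    using assms(3,5) fock_space_not_admissible by (simp add: occ_dec_occ_inc_comm)
  then show ?thesis using False by (simp add: fock_op_not_admissible)
qed

lemma fock_op_fermionic_square:
  assumes a: "a \<in> gens l" and fermionic: "Q (fst a) (fst a) \<noteq> 1" and n: "adm n" and f: "f \<in> fock_space Q l"
  shows "F a (F a f) n = 0"
proof (cases "creation a")
  case True
  have "n a \<le> 1" using n fermionic unfolding admissible_occ_def by blast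
  then show ?thesis using True n by (simp add: fock_op_creation admissible_occ_dec)
next
  case False
  have "\<not> adm (occ_inc (dual_gen a) (occ_inc (dual_gen a) n))"
    using admissible_occ_inc[of "dual_gen a"] a fermionic by simp
  then show ?thesis using False f by (simp add: fock_op_annihilation fock_op_fock_space fock_space_not_admissible)
qed

lemma fock_op_comm_self:
  assumes "a \<in> gens l" "adm n" "f \<in> fock_space Q l"
  shows "F a (F a f) n = comm_coeff Q a a * F a (F a f) n + comm_const Q a a * f n"
proof -
  have "comm_const Q a a = 0" using dual_gen_neq[of a] by (intro comm_const_other) auto
  then show ?thesis using fock_op_fermionic_square[OF assms(1) _ assms(2,3)]
    by (cases "Q (fst a) (fst a) = 1") (simp_all add: comm_coeff_self)
qed

lemma fock_op_add: "F a (\<lambda>n. f n + g n) = (\<lambda>n. F a f n + F a g n)"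
  and fock_op_smult: "F a (\<lambda>n. c * f n) = (\<lambda>n. c * F a f n)"
  by (auto simp: fock_op_def algebra_simps)

end

definition fock_module :: "(nat \<Rightarrow> nat \<Rightarrow> complex) \<Rightarrow> nat \<Rightarrow> (complex, occupation \<Rightarrow> complex) module" where
  "fock_module Q l = \<lparr>carrier = fock_space Q l, mult = (\<lambda>f g. f), one = (\<lambda>_. 0), zero = (\<lambda>_. 0),
     add = (\<lambda>f g n. f n + g n), smult = (\<lambda>c f n. c * f n)\<rparr>"

definition fock_X :: "(nat \<Rightarrow> nat \<Rightarrow> complex) \<Rightarrow> nat \<Rightarrow> nat \<Rightarrow> int \<Rightarrow> (occupation \<Rightarrow> complex) \<Rightarrow> occupation \<Rightarrow> complex"
  where "fock_X Q l i m = fock_op Q l (i, m, True)"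

definition fock_Y :: "(nat \<Rightarrow> nat \<Rightarrow> complex) \<Rightarrow> nat \<Rightarrow> nat \<Rightarrow> int \<Rightarrow> (occupation \<Rightarrow> complex) \<Rightarrow> occupation \<Rightarrow> complex"
  where "fock_Y Q l i m = fock_op Q l (i, m, False)"

definition fock_vac :: "occupation \<Rightarrow> complex" where
  "fock_vac = (\<lambda>n. if n = (\<lambda>_. 0) then 1 else 0)"

lemma fock_module_simps[simp]:
  "carrier (fock_module Q l) = fock_space Q l" "zero (fock_module Q l) = (\<lambda>_. 0)"
  "add (fock_module Q l) = (\<lambda>f g n. f n + g n)" "smult (fock_module Q l) = (\<lambda>c f n. c * f n)"
  by (simp_all add: fock_module_def)

lemma fock_space_add: "f \<in> fock_space Q l \<Longrightarrow> g \<in> fock_space Q l \<Longrightarrow> (\<lambda>n. f n + g n) \<in> fock_space Q l"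
  and fock_space_smult: "f \<in> fock_space Q l \<Longrightarrow> (\<lambda>n. c * f n) \<in> fock_space Q l"
  and fock_space_zero: "(\<lambda>_. 0) \<in> fock_space Q l"
  by (simp_all add: fock_space_def)

lemma module_fock_module: "module CC (fock_module Q l)"
proof (rule moduleI[OF cring_CC])
  show "abelian_group (fock_module Q l)"
  proof (rule abelian_groupI)
    fix x assume x: "x \<in> carrier (fock_module Q l)"
    show "\<exists>y\<in>carrier (fock_module Q l). y \<oplus>\<^bsub>fock_module Q l\<^esub> x = \<zero>\<^bsub>fock_module Q l\<^esub>"
      using x by (intro bexI[of _ "\<lambda>n. - x n"]) (auto simp: fock_space_def)
  qed (auto simp: fock_space_add fock_space_zero algebra_simps)
qed (auto simp: fock_space_add fock_space_smult algebra_simps)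

lemma admissible_occ_zero: "admissible_occ Q l (\<lambda>_. 0)"
  by (simp add: admissible_occ_def)

lemma fock_vac_fock_space: "fock_vac \<in> fock_space Q l"
  by (auto simp: fock_space_def fock_vac_def admissible_occ_zero)

lemma is_vacuum_fock_vac: "is_vacuum l (fock_module Q l) (fock_X Q l) (fock_Y Q l) fock_vac"
  unfolding is_vacuum_def
proof (intro conjI ballI allI impI)
  show "fock_vac \<in> carrier (fock_module Q l)" using fock_vac_fock_space by simp
  fix i :: nat and m :: int assume i: "i \<in> {1..l}" and m: "0 \<le> m"
  have z: "fock_vac (occ_inc a n) = 0" for a n
  proof -
    have "occ_inc a n a \<noteq> 0" by simp
    then have "occ_inc a n \<noteq> (\<lambda>_. 0)" by force
    then show ?thesis by (simp add: fock_vac_def)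
  qed
  have nc: "\<not> creation (i, m, b)" for b using m by (simp add: creation_def)
  show "fock_X Q l i m fock_vac = \<zero>\<^bsub>fock_module Q l\<^esub>"
    using fock_op_annihilation[OF fock_vac_fock_space nc] z by (auto simp: fock_X_def)
  show "fock_Y Q l i m fock_vac = \<zero>\<^bsub>fock_module Q l\<^esub>"
    using fock_op_annihilation[OF fock_vac_fock_space nc] z by (auto simp: fock_Y_def)
qed

lemma fock_vac_nonzero: "fock_vac \<noteq> \<zero>\<^bsub>fock_module Q l\<^esub>"
proof
  assume "fock_vac = \<zero>\<^bsub>fock_module Q l\<^esub>"
  then have "fock_vac (\<lambda>_. 0) = (0::complex)" by (metis fock_module_simps(2))
  then show False by (simp add: fock_vac_def)
qed

context reciprocal_matrix
begin

abbreviation F :: "gen \<Rightarrow> (occupation \<Rightarrow> complex) \<Rightarrow> occupation \<Rightarrow> complex" where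
  "F \<equiv> fock_op Q l"

abbreviation adm :: "occupation \<Rightarrow> bool" where
  "adm \<equiv> admissible_occ Q l"

lemma order_factor_nonzero:
  assumes n: "adm n" and a: "a \<in> gens l"
  shows "order_factor Q a n \<noteq> 0"
proof -
  have "(if g < a then comm_coeff Q a g ^ n g else 1) \<noteq> 0" if "n g \<noteq> 0" for g
  proof -
    have "g \<in> gens l" using n that unfolding admissible_occ_def by blast
    then show ?thesis using comm_coeff_nonzero[OF a] by simp
  qed
  then show ?thesis unfolding order_factor_def prod_zero_iff[OF admissible_occ_finite[OF n]] by blast
qed

lemma fock_op_comm_creation_creation:
  assumes a: "a \<in> gens l" "creation a" and d: "d \<in> gens l" "creation d" and ad: "a \<noteq> d"
    and n: "adm n" and f: "f \<in> fock_space Q l"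
  shows "F a (F d f) n = comm_coeff Q a d * F d (F a f) n"
proof (cases "n a = 0 \<or> n d = 0")
  case True
  then show ?thesis using n a d ad by (auto simp: fock_op_creation admissible_occ_dec)
next
  case False
  define m where "m = occ_dec a (occ_dec d n)"
  have m_a: "occ_dec a n = occ_inc d m"
    using False ad occ_inc_occ_dec[of "occ_dec a n" d] by (simp add: m_def occ_dec_commute)
  have m_d: "occ_dec d n = occ_inc a m"
    using False ad occ_inc_occ_dec[of "occ_dec d n" a] by (simp add: m_def)
  have fin: "finite {g. m g \<noteq> 0}" unfolding m_def using admissible_occ_finite[OF n] finite_occ_dec by blast
  have m_da: "occ_dec d (occ_dec a n) = m" and m_ad: "occ_dec a (occ_dec d n) = m"
    using occ_dec_commute[OF ad] by (simp_all add: m_def)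
  have L: "F a (F d f) n = order_factor Q a (occ_inc d m) * (order_factor Q d m * f m)"
    using False ad n a d m_da m_a[symmetric] by (simp add: fock_op_creation admissible_occ_dec)
  have R: "F d (F a f) n = order_factor Q d (occ_inc a m) * (order_factor Q a m * f m)"
    using False ad n a d m_ad m_d[symmetric] by (simp add: fock_op_creation admissible_occ_dec)
  show ?thesis
  proof (cases "d < a")
    case True
    then have "\<not> a < d" by simp
    then show ?thesis
      using True L R order_factor_occ_inc[OF fin, of d a] order_factor_occ_inc[OF fin, of a d] ad
      by (simp add: ac_simps)
  next
    case False
    then have "a < d" using ad by simp
    then have "comm_coeff Q a d * F d (F a f) n
        = (comm_coeff Q a d * comm_coeff Q d a) * (order_factor Q d m * (order_factor Q a m * f m))"
      using R order_factor_occ_inc[OF fin, of a d] ad by (simp add: ac_simps)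
    then show ?thesis
      using False L order_factor_occ_inc[OF fin, of d a] ad comm_coeff_mult_swap[OF a(1) d(1)]
      by (simp add: ac_simps)
  qed
qed

lemma fock_op_comm_annihilation_annihilation:
  assumes a: "a \<in> gens l" "\<not> creation a" and d: "d \<in> gens l" "\<not> creation d" and ad: "a \<noteq> d"
    and n: "adm n" and f: "f \<in> fock_space Q l"
  shows "F a (F d f) n = comm_coeff Q a d * F d (F a f) n"
proof -
  define \<alpha> where "\<alpha> = dual_gen a"
  define \<beta> where "\<beta> = dual_gen d"
  have ga: "\<alpha> \<in> gens l" "\<beta> \<in> gens l" and \<alpha>\<beta>: "\<alpha> \<noteq> \<beta>"
    using a d ad by (simp_all add: \<alpha>_def \<beta>_def dual_gen_eq_iff)
  have fin: "finite {g. n g \<noteq> 0}" using admissible_occ_finite[OF n] .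
  have L: "F a (F d f) n = qnum Q \<alpha> (Suc (n \<alpha>)) * inverse (order_factor Q \<alpha> n) *
      (qnum Q \<beta> (Suc (n \<beta>)) * inverse (order_factor Q \<beta> (occ_inc \<alpha> n)) * f (occ_inc \<beta> (occ_inc \<alpha> n)))"
    using a d f \<alpha>\<beta> fock_op_fock_space by (simp add: fock_op_annihilation \<alpha>_def \<beta>_def)
  have R: "F d (F a f) n = qnum Q \<beta> (Suc (n \<beta>)) * inverse (order_factor Q \<beta> n) *
      (qnum Q \<alpha> (Suc (n \<alpha>)) * inverse (order_factor Q \<alpha> (occ_inc \<beta> n)) * f (occ_inc \<beta> (occ_inc \<alpha> n)))"
    using a d f \<alpha>\<beta> fock_op_fock_space by (simp add: fock_op_annihilation \<alpha>_def \<beta>_def occ_inc_commute)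
  have k: "comm_coeff Q a d = comm_coeff Q \<alpha> \<beta>"
    using comm_coeff_dual_left[of a "dual_gen d"] comm_coeff_dual_left[of d a] a d by (simp add: \<alpha>_def \<beta>_def)
  have t: "order_factor Q \<beta> (occ_inc \<alpha> n) = order_factor Q \<beta> n * (if \<alpha> < \<beta> then comm_coeff Q \<beta> \<alpha> else 1)"
    "order_factor Q \<alpha> (occ_inc \<beta> n) = order_factor Q \<alpha> n * (if \<beta> < \<alpha> then comm_coeff Q \<alpha> \<beta> else 1)"
    using order_factor_occ_inc[OF fin] \<alpha>\<beta> by auto
  show ?thesis
  proof (cases "\<alpha> < \<beta>")
    case True
    then have "\<not> \<beta> < \<alpha>" by simp
    then show ?thesis using True L R t k inverse_comm_coeff[OF ga(2,1)] by (simp add: ac_simps)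
  next
    case False
    then have "\<beta> < \<alpha>" using \<alpha>\<beta> by simp
    then show ?thesis using False L R t k comm_coeff_nonzero[OF ga] by (simp add: ac_simps)
  qed
qed

lemma qnum_occ_inc:
  assumes n: "adm n" and \<alpha>: "\<alpha> \<in> gens l"
  shows "(if adm (occ_inc \<alpha> n) then qnum Q \<alpha> (Suc (n \<alpha>)) else 0)
    = Q (fst \<alpha>) (fst \<alpha>) * (if 0 < n \<alpha> then qnum Q \<alpha> (n \<alpha>) else 0) + number_coeff Q \<alpha>"
proof -
  have adm_inc: "adm (occ_inc \<alpha> n) \<longleftrightarrow> (Q (fst \<alpha>) (fst \<alpha>) \<noteq> 1 \<longrightarrow> n \<alpha> = 0)"
    using admissible_occ_inc[OF \<alpha>] n by simp
  show ?thesis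
  proof (cases "Q (fst \<alpha>) (fst \<alpha>) = 1")
    case True
    then show ?thesis using adm_inc by (simp add: qnum_Suc)
  next
    case False
    then have "Q (fst \<alpha>) (fst \<alpha>) = -1" using diagonal_sign gens_fst[OF \<alpha>] by blast
    moreover have "n \<alpha> \<le> 1" using n False unfolding admissible_occ_def by blast
    ultimately show ?thesis using adm_inc by (cases "n \<alpha>") (simp_all add: qnum_Suc)
  qed
qed

lemma fock_op_comm_annihilation_creation_other:
  assumes a: "a \<in> gens l" "\<not> creation a" and d: "d \<in> gens l" "creation d" "d \<noteq> dual_gen a"
    and n: "adm n" and f: "f \<in> fock_space Q l"
  shows "F a (F d f) n = comm_coeff Q a d * F d (F a f) n"
proof -
  define \<alpha> where "\<alpha> = dual_gen a"
  have ga: "\<alpha> \<in> gens l" and d\<alpha>: "d \<noteq> \<alpha>" using a d by (simp_all add: \<alpha>_def)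
  have fin: "finite {g. n g \<noteq> 0}" using admissible_occ_finite[OF n] .
  have L: "F a (F d f) n = qnum Q \<alpha> (Suc (n \<alpha>)) * inverse (order_factor Q \<alpha> n) * F d f (occ_inc \<alpha> n)"
    using a fock_op_fock_space by (simp add: fock_op_annihilation \<alpha>_def)
  have R: "F d (F a f) n = (if 0 < n d then order_factor Q d (occ_dec d n) *
       (qnum Q \<alpha> (Suc (occ_dec d n \<alpha>)) * inverse (order_factor Q \<alpha> (occ_dec d n)) * f (occ_inc \<alpha> (occ_dec d n))) else 0)"
    using a d n f by (simp add: fock_op_creation fock_op_annihilation \<alpha>_def)
  have Fd: "F d f (occ_inc \<alpha> n)
      = (if 0 < n d then order_factor Q d (occ_dec d (occ_inc \<alpha> n)) * f (occ_dec d (occ_inc \<alpha> n)) else 0)"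
    using fock_op_creation_occ_inc[OF ga d(2) d\<alpha> n f] .
  show ?thesis
  proof (cases "n d = 0")
    case True
    then show ?thesis using L R Fd by simp
  next
    case nd: False
    define m where "m = occ_dec d n"
    have nm: "n = occ_inc d m" unfolding m_def using nd by (simp add: occ_inc_occ_dec)
    have finm: "finite {g. m g \<noteq> 0}" unfolding m_def using fin finite_occ_dec by blast
    have e1: "occ_dec d (occ_inc \<alpha> n) = occ_inc \<alpha> m" unfolding m_def using d\<alpha> by (simp add: occ_dec_occ_inc_comm)
    have e2: "m \<alpha> = n \<alpha>" unfolding m_def using d\<alpha> by simp
    have t1: "order_factor Q \<alpha> n = order_factor Q \<alpha> m * (if d < \<alpha> then comm_coeff Q \<alpha> d else 1)"
      unfolding nm using order_factor_occ_inc[OF finm] d\<alpha> by metis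
    have t2: "order_factor Q d (occ_inc \<alpha> m) = order_factor Q d m * (if \<alpha> < d then comm_coeff Q d \<alpha> else 1)"
      using order_factor_occ_inc[OF finm] d\<alpha> by metis
    have k: "comm_coeff Q a d = inverse (comm_coeff Q \<alpha> d)"
      using comm_coeff_dual_left[OF ga d(1)] inverse_comm_coeff[OF ga d(1)] by (simp add: \<alpha>_def)
    have kinv: "inverse (comm_coeff Q \<alpha> d) = comm_coeff Q d \<alpha>" using inverse_comm_coeff ga d by blast
    have LL: "F a (F d f) n
        = qnum Q \<alpha> (Suc (n \<alpha>)) * inverse (order_factor Q \<alpha> n) * (order_factor Q d (occ_inc \<alpha> m) * f (occ_inc \<alpha> m))"
      using L Fd nd e1 by simp
    have RR: "F d (F a f) n
        = order_factor Q d m * (qnum Q \<alpha> (Suc (n \<alpha>)) * inverse (order_factor Q \<alpha> m) * f (occ_inc \<alpha> m))"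
      using R nd e2 by (simp add: m_def)
    show ?thesis
    proof (cases "\<alpha> < d")
      case True
      then have "\<not> d < \<alpha>" by simp
      then show ?thesis using True LL RR t1 t2 k kinv by (simp add: ac_simps)
    next
      case False
      then have "d < \<alpha>" using d\<alpha> by simp
      then show ?thesis using False LL RR t1 t2 k by (simp add: ac_simps)
    qed
  qed
qed

lemma fock_op_comm_annihilation_dual:
  assumes a: "a \<in> gens l" "\<not> creation a" and n: "adm n" and f: "f \<in> fock_space Q l"
  shows "F a (F (dual_gen a) f) n
    = Q (fst a) (fst a) * F (dual_gen a) (F a f) n + number_coeff Q (dual_gen a) * f n"
proof -
  define \<alpha> where "\<alpha> = dual_gen a"
  have ga: "\<alpha> \<in> gens l" and c\<alpha>: "creation \<alpha>" using a creation_dual_gen[of a] by (simp_all add: \<alpha>_def)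
  have fin: "finite {g. n g \<noteq> 0}" using admissible_occ_finite[OF n] .
  have "F \<alpha> f (occ_inc \<alpha> n) = (if adm (occ_inc \<alpha> n) then order_factor Q \<alpha> n * f n else 0)"
    using c\<alpha> fin by (simp add: fock_op_creation fock_op_not_admissible order_factor_occ_inc_self[symmetric])
  then have LL: "F a (F \<alpha> f) n = (if adm (occ_inc \<alpha> n) then qnum Q \<alpha> (Suc (n \<alpha>)) else 0) * f n"
    using a fock_op_fock_space order_factor_nonzero[OF n ga] by (simp add: fock_op_annihilation \<alpha>_def)
  have RR: "F \<alpha> (F a f) n = (if 0 < n \<alpha> then qnum Q \<alpha> (n \<alpha>) else 0) * f n"
  proof (cases "0 < n \<alpha>")
    case True
    then show ?thesis
      using a f n c\<alpha> order_factor_nonzero[OF admissible_occ_dec[OF n] ga]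
      by (simp add: fock_op_creation fock_op_annihilation \<alpha>_def occ_inc_occ_dec)
  qed (use n c\<alpha> in \<open>simp add: fock_op_creation\<close>)
  show ?thesis
    using LL RR qnum_occ_inc[OF n ga] by (simp add: \<alpha>_def algebra_simps)
qed

lemma fock_op_comm_annihilation_creation:
  assumes "a \<in> gens l" "\<not> creation a" "d \<in> gens l" "creation d" "adm n" "f \<in> fock_space Q l"
  shows "F a (F d f) n = comm_coeff Q a d * F d (F a f) n + comm_const Q a d * f n"
proof (cases "d = dual_gen a")
  case True
  then show ?thesis
    using fock_op_comm_annihilation_dual[OF assms(1,2,5,6)]
    by (simp add: comm_coeff_dual_self comm_const_dual)
qed (simp add: fock_op_comm_annihilation_creation_other[OF assms(1-3)] assms comm_const_other)

lemma fock_op_comm_creation_annihilation: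
  assumes "a \<in> gens l" "creation a" "d \<in> gens l" "\<not> creation d" "adm n" "f \<in> fock_space Q l"
  shows "F a (F d f) n = comm_coeff Q a d * F d (F a f) n + comm_const Q a d * f n"
  using fock_op_comm_annihilation_creation[OF assms(3,4,1,2,5,6)] comm_coeff_mult_swap[OF assms(1,3)]
    comm_const_swap[OF assms(1,3)]
  by (simp add: algebra_simps)

lemma fock_op_comm:
  assumes a: "a \<in> gens l" and d: "d \<in> gens l" and f: "f \<in> fock_space Q l"
  shows "F a (F d f) n = comm_coeff Q a d * F d (F a f) n + comm_const Q a d * f n"
proof (cases "adm n")
  case False
  then show ?thesis using f by (simp add: fock_op_not_admissible fock_space_not_admissible)
next
  case n: True
  consider "a = d" | "a \<noteq> d" "creation a \<longleftrightarrow> creation d" | "creation a" "\<not> creation d" | "\<not> creation a" "creation d"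
    by blast
  then show ?thesis
  proof cases
    case 1
    then show ?thesis using fock_op_comm_self[OF a n f] by simp
  next
    case 2
    then have "comm_const Q a d = 0" using creation_dual_gen[of a] by (auto intro: comm_const_other)
    then show ?thesis
      using 2 fock_op_comm_creation_creation[OF a _ d _ _ n f] fock_op_comm_annihilation_annihilation[OF a _ d _ _ n f]
      by (cases "creation a") simp_all
  next
    case 3
    then show ?thesis using fock_op_comm_creation_annihilation[OF a _ d _ n f] by simp
  next
    case 4
    then show ?thesis using fock_op_comm_annihilation_creation[OF a _ d _ n f] by simp
  qed
qed

lemma AQ_module_fock_module: "AQ_module Q l (fock_module Q l) (fock_X Q l) (fock_Y Q l)"
  unfolding AQ_module_def
proof (intro conjI ballI allI module_fock_module)
  fix i n
  show "lin_op (fock_module Q l) (fock_X Q l i n)" "lin_op (fock_module Q l) (fock_Y Q l i n)"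
    by (auto simp: lin_op_def fock_X_def fock_Y_def fock_op_fock_space fock_op_add fock_op_smult)
next
  fix i j m n v assume "i \<in> {1..l}" "j \<in> {1..l}" "v \<in> carrier (fock_module Q l)"
  then have comm: "F (i, m, b) (F (j, n, b') v) s
      = comm_coeff Q (i, m, b) (j, n, b') * F (j, n, b') (F (i, m, b) v) s + comm_const Q (i, m, b) (j, n, b') * v s"
    for b b' s by (intro fock_op_comm) auto
  have "(j, n, False) = dual_gen (i, m, True) \<longleftrightarrow> i = j \<and> m + n + 1 = 0"
    by (auto simp: dual_gen_def)
  then show "fock_X Q l i m (fock_X Q l j n v) = Q i j \<odot>\<^bsub>fock_module Q l\<^esub> fock_X Q l j n (fock_X Q l i m v)"
    and "fock_Y Q l i m (fock_Y Q l j n v) = Q i j \<odot>\<^bsub>fock_module Q l\<^esub> fock_Y Q l j n (fock_Y Q l i m v)"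
    and "fock_X Q l i m (fock_Y Q l j n v) = Q j i \<odot>\<^bsub>fock_module Q l\<^esub> fock_Y Q l j n (fock_X Q l i m v)
      \<oplus>\<^bsub>fock_module Q l\<^esub> (if i = j \<and> m + n + 1 = 0 then v else \<zero>\<^bsub>fock_module Q l\<^esub>)"
    using comm[of True True] comm[of False False] comm[of True False]
    by (auto simp: fock_X_def fock_Y_def comm_coeff_def comm_const_def dual_gen_def)
qed

lemma fa_word_Nil_notin_NQ: "fa_word [] \<notin> NQ Q l"
proof
  assume h: "fa_word [] \<in> NQ Q l"
  interpret A: aq_rep Q l "fock_module Q l" "fock_X Q l" "fock_Y Q l"
    by (rule aq_rep.intro[OF AQ_module_fock_module])
  have "fa_act (fock_module Q l) (fock_X Q l) (fock_Y Q l) (fa_word []) fock_vac = \<zero>\<^bsub>fock_module Q l\<^esub>"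
    using A.fa_act_NQ_vacuum[OF h is_vacuum_fock_vac] .
  moreover have "fa_act (fock_module Q l) (fock_X Q l) (fock_Y Q l) (fa_word []) fock_vac = fock_vac"
    using A.fa_act_word[of "[]" fock_vac] fock_vac_fock_space by simp
  ultimately show False using fock_vac_nonzero by simp
qed

lemma VQ_nontrivial: "carrier (VQ Q l) \<noteq> {\<zero>\<^bsub>VQ Q l\<^esub>}"
proof
  assume "carrier (VQ Q l) = {\<zero>\<^bsub>VQ Q l\<^esub>}"
  then have "cls Q l (fa_word []) = cls Q l fa_zero"
    using VQ_vac_in_VQ[of Q l] by (simp add: VQ_vac_def VQ_zero)
  then have "fa_add (fa_word []) (fa_smult (-1) fa_zero) \<in> NQ Q l"
    by (rule cls_eqD[OF fa_word_FA[of "[]" l], rotated]) simp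
  moreover have "fa_add (fa_word []) (fa_smult (-1) fa_zero) = fa_word []" by (auto simp: fa_defs)
  ultimately show False using fa_word_Nil_notin_NQ by simp
qed

end

lemma (in reciprocal_matrix) vacuum_rep_if_vacuum_module: "vacuum_module Q l M X Y w \<Longrightarrow> vacuum_rep Q l M X Y w"
  unfolding vacuum_rep_def vacuum_rep_axioms_def reciprocal_aq_rep_def aq_rep_def
  using reciprocal_matrix_axioms by (simp add: vacuum_module_def)

theorem proposition3p6:
  fixes Q :: "nat \<Rightarrow> nat \<Rightarrow> complex" and l :: nat
  assumes "\<forall>i\<in>{1..l}. \<forall>j\<in>{1..l}. Q i j * Q j i = 1"
  shows "vacuum_module Q l (VQ Q l) (VQ_X Q l) (VQ_Y Q l) (VQ_vac Q l)
         \<and> AQ_irreducible Q l (VQ Q l) (VQ_X Q l) (VQ_Y Q l)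
         \<and> (\<forall>(M :: (complex, 'm) module) X Y w.
              vacuum_module Q l M X Y w \<and> carrier M \<noteq> {\<zero>\<^bsub>M\<^esub>} \<longrightarrow>
                AQ_irreducible Q l M X Y
                \<and> (\<exists>\<phi>. AQ_iso l \<phi> (VQ Q l) (VQ_X Q l) (VQ_Y Q l) M X Y))"
proof (intro conjI allI impI)
  interpret reciprocal_matrix Q l
    using assms by unfold_locales blast
  show "vacuum_module Q l (VQ Q l) (VQ_X Q l) (VQ_Y Q l) (VQ_vac Q l)"
    by (rule vacuum_module_VQ)
  show VQ_irreducible: "AQ_irreducible Q l (VQ Q l) (VQ_X Q l) (VQ_Y Q l)"
    by (rule vacuum_rep.vacuum_module_irreducible[OF vacuum_rep_if_vacuum_module[OF vacuum_module_VQ] VQ_nontrivial])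
  fix M :: "(complex, 'm) module" and X Y w
  assume "vacuum_module Q l M X Y w \<and> carrier M \<noteq> {\<zero>\<^bsub>M\<^esub>}"
  then have M: "vacuum_module Q l M X Y w" and nontrivial: "carrier M \<noteq> {\<zero>\<^bsub>M\<^esub>}" by blast+
  interpret M: vacuum_rep Q l M X Y w by (rule vacuum_rep_if_vacuum_module[OF M])
  show "AQ_irreducible Q l M X Y" by (rule M.vacuum_module_irreducible[OF nontrivial])
  show "\<exists>\<phi>. AQ_iso l \<phi> (VQ Q l) (VQ_X Q l) (VQ_Y Q l) M X Y"
    using M.VQ_iso[OF nontrivial VQ_irreducible] by blast
qed

end
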